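(* Let $p\ge0$, $\Omega>0$, $S^{(1)},S^{(2)}\in\mathcal B_\Omega$, $x\in[0,\pi]$, and $\mathcal A=\tilde Q^{(1)}(x)(T^{(1)})^{-1}-\tilde Q^{(2)}(x)(T^{(2)})^{-1}$, where objects with superscript $(l)$ are constructed from $S^{(l)}$. Then $\mathcal A$ maps $m$ into $l_2$ and for every $f\in m$, $$\|\mathcal Af\|_{l_2}\le C Z\|f\|_m,$$ where $Z=(\sum_n\delta_n^2)^{1/2}$, $\delta_n=|\rho_n^{(1)}-\rho_n^{(2)}|+|\alpha_n^{(1)}-\alpha_n^{(2)}|$, and $C$ depends only on $p,\Omega$.
   Context: $\mathcal S_p$: collections $S=\{\lambda_n,\alpha_n\}_{n\ge1}$ of complex numbers with $\rho_n:=\sqrt{\lambda_n}$ ($\arg\rho_n\in[-\pi/2,\pi/2)$), $\rho_n=n-p-1+\varkappa_n$, $\alpha_n=2/\pi+\kappa_n$, $\{\varkappa_n\},\{\kappa_n\}\in l_2$. Model data: $\tilde\rho_n=0$ for $n\le p+1$, $\tilde\rho_n=n-p-1$ for $n\ge p+1$, $\tilde\lambda_n=\tilde\rho_n^2$; $\tilde\alpha_1=1/\pi$, $\tilde\alpha_n=0$ for $2\le n\le p+1$, $\tilde\alpha_n=2/\pi$ for $n\ge p+2$. $\xi_n=|\rho_n-\tilde\rho_n|+|\alpha_n-\tilde\alpha_n|$, $\mathcal B_\Omega=\{S\in\mathcal S_p:(\sum\xi_n^2)^{1/2}\le\Omega\}$. For a given $S$: $\lambda_{n0}=\lambda_n,\rho_{n0}=\rho_n,\alpha_{n0}=\alpha_n$,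 $\lambda_{n1}=\tilde\lambda_n,\rho_{n1}=\tilde\rho_n,\alpha_{n1}=\tilde\alpha_n$, $\hat\rho_n=\rho_n-\tilde\rho_n$; $\tilde D(x,\lambda,\mu)=\int_0^x\cos(\sqrt\lambda t)\cos(\sqrt\mu t)dt$; $\tilde Q_{ni,kj}(x)=\alpha_{kj}\tilde D(x,\rho_{ni}^2,\rho_{kj}^2)$; $\tilde Q_{nk}=\begin{pmatrix}\tilde Q_{n0,k0}&-\tilde Q_{n0,k1}\\ \tilde Q_{n1,k0}&-\tilde Q_{n1,k1}\end{pmatrix}$; $T_k^{-1}=\begin{pmatrix}\hat\rho_k&1\\0&1\end{pmatrix}$. $m$: Banach space of bounded sequences $f=(f_{ni})_{n\ge1,i=0,1}$ with sup norm; for $f\in m$, $(T^{-1}f)_n=(\hat\rho_nf_{n0}+f_{n1},f_{n1})^T$ and $(\tilde Q(x)T^{-1}f)_n=\sum_k\tilde Q_{nk}(x)T_k^{-1}f_k$, $f_k=(f_{k0},f_{k1})^T$. *)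

theory Defs
  imports "HOL-Analysis.Analysis"
begin

text \<open>Square root with argument in [-pi/2, pi/2): on the imaginary axis the
  branch with nonpositive imaginary part is chosen.\<close>
definition psqrt :: "complex \<Rightarrow> complex" where
  "psqrt z = (if Re (csqrt z) = 0 then - csqrt z else csqrt z)"

text \<open>Data S = {lambda_n, alpha_n}, indexed by n >= 1 (the value at index 0 is ignored).\<close>
definition rho_of :: "(nat \<Rightarrow> complex) \<Rightarrow> nat \<Rightarrow> complex" where
  "rho_of lam n = psqrt (lam n)"

definition in_Sp :: "nat \<Rightarrow> (nat \<Rightarrow> complex) \<Rightarrow> (nat \<Rightarrow> complex) \<Rightarrow> bool" where
  "in_Sp p lam al \<longleftrightarrow>
     summable (\<lambda>n. (cmod (rho_of lam (Suc n) - of_real (real (Suc n) - real p - 1)))\<^sup>2) \<and>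
     summable (\<lambda>n. (cmod (al (Suc n) - of_real (2 / pi)))\<^sup>2)"

definition rho_t :: "nat \<Rightarrow> nat \<Rightarrow> complex" where
  "rho_t p n = (if n \<le> p + 1 then 0 else of_real (real n - real p - 1))"

definition alpha_t :: "nat \<Rightarrow> nat \<Rightarrow> complex" where
  "alpha_t p n = (if n = 1 then of_real (1 / pi) else if n \<le> p + 1 then 0 else of_real (2 / pi))"

definition xi :: "nat \<Rightarrow> (nat \<Rightarrow> complex) \<Rightarrow> (nat \<Rightarrow> complex) \<Rightarrow> nat \<Rightarrow> real" where
  "xi p lam al n = cmod (rho_of lam n - rho_t p n) + cmod (al n - alpha_t p n)"

definition in_B :: "nat \<Rightarrow> real \<Rightarrow> (nat \<Rightarrow> complex) \<Rightarrow> (nat \<Rightarrow> complex) \<Rightarrow> bool" where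
  "in_B p \<Omega> lam al \<longleftrightarrow> in_Sp p lam al \<and> sqrt (\<Sum>n. (xi p lam al (Suc n))\<^sup>2) \<le> \<Omega>"

definition Dt :: "real \<Rightarrow> complex \<Rightarrow> complex \<Rightarrow> complex" where
  "Dt x la mu = integral {0..x} (\<lambda>t. cos (psqrt la * of_real t) * cos (psqrt mu * of_real t))"

definition rhoI :: "nat \<Rightarrow> (nat \<Rightarrow> complex) \<Rightarrow> nat \<Rightarrow> nat \<Rightarrow> complex" where
  "rhoI p lam n i = (if i = 0 then rho_of lam n else rho_t p n)"

definition alI :: "nat \<Rightarrow> (nat \<Rightarrow> complex) \<Rightarrow> nat \<Rightarrow> nat \<Rightarrow> complex" where
  "alI p al n i = (if i = 0 then al n else alpha_t p n)"

definition Qt :: "nat \<Rightarrow> (nat \<Rightarrow> complex) \<Rightarrow> (nat \<Rightarrow> complex) \<Rightarrow> real \<Rightarrow> nat \<Rightarrow> nat \<Rightarrow> nat \<Rightarrow> nat \<Rightarrow> complex" where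
  "Qt p lam al x n i k j = alI p al k j * Dt x ((rhoI p lam n i)\<^sup>2) ((rhoI p lam k j)\<^sup>2)"

text \<open>The k-th summand of component i of (Q~(x) T^{-1} f)_n:
  Q~_{nk} T_k^{-1} f_k with T_k^{-1} f_k = (rhohat_k f_{k0} + f_{k1}, f_{k1}).\<close>
definition QT_term :: "nat \<Rightarrow> (nat \<Rightarrow> complex) \<Rightarrow> (nat \<Rightarrow> complex) \<Rightarrow> real \<Rightarrow> (nat \<Rightarrow> nat \<Rightarrow> complex)
    \<Rightarrow> nat \<Rightarrow> nat \<Rightarrow> nat \<Rightarrow> complex" where
  "QT_term p lam al x f n i k =
     Qt p lam al x n i k 0 * ((rho_of lam k - rho_t p k) * f k 0 + f k 1) - Qt p lam al x n i k 1 * f k 1"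

definition QT :: "nat \<Rightarrow> (nat \<Rightarrow> complex) \<Rightarrow> (nat \<Rightarrow> complex) \<Rightarrow> real \<Rightarrow> (nat \<Rightarrow> nat \<Rightarrow> complex)
    \<Rightarrow> nat \<Rightarrow> nat \<Rightarrow> complex" where
  "QT p lam al x f n i = (\<Sum>k. QT_term p lam al x f n i (Suc k))"

definition in_m :: "(nat \<Rightarrow> nat \<Rightarrow> complex) \<Rightarrow> bool" where
  "in_m f \<longleftrightarrow> bdd_above {cmod (f n i) | n i. n \<ge> 1 \<and> i \<le> 1}"

definition m_norm :: "(nat \<Rightarrow> nat \<Rightarrow> complex) \<Rightarrow> real" where
  "m_norm f = Sup {cmod (f n i) | n i. n \<ge> 1 \<and> i \<le> 1}"

end

theory Submission
  imports Defs
begin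

text \<open>The k-th summand of (Q~(x) T^{-1} f)_{ni} is the integral over [0, x] of cos(rho_{ni} t) against a
  kernel h_k(t) whose coefficients are O(xi_k). Linearising cos(rho_k t) at rho~_k, a finite sum of kernels
  becomes a combination of the model modes cos(rho~_k t) and t sin(rho~_k t), which are orthogonal on [0, pi]
  apart from the p + 2 constant ones, plus a remainder that is quadratic in xi. Its L2 norm is therefore
  bounded by the l2 norm of the coefficients, and for the difference of two data sets by that of delta.
  A row of A is an integral of such a sum against cos(rho~_n t), controlled by Bessel's inequality, plus
  integrals against cos(rho_n t) - cos(rho~_n t) and cos(rho1_n t) - cos(rho2_n t), which are O(xi_n)
  and O(delta_n) uniformly on [0, pi]. The same estimates on blocks of the series give convergence of every
  entry by Cauchy's criterion.\<close>

section \<open>Complex cosines on horizontal strips\<close>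

lemma convex_abs_Im_le: "convex {z::complex. \<bar>Im z\<bar> \<le> R}"
proof -
  have "{z::complex. \<bar>Im z\<bar> \<le> R} = {z. Im z \<le> R} \<inter> {z. Im z \<ge> - R}" by auto
  then show ?thesis by (simp add: convex_Int convex_halfspace_Im_le convex_halfspace_Im_ge)
qed

lemma norm_cos_le_exp_abs_Im:
  assumes "\<bar>Im w\<bar> \<le> R"
  shows "cmod (cos w) \<le> exp R"
proof -
  have "cmod (cos w) = cmod (exp (\<i> * w) + exp (- (\<i> * w))) / 2"
    by (simp add: cos_exp_eq norm_divide)
  also have "\<dots> \<le> (cmod (exp (\<i> * w)) + cmod (exp (- (\<i> * w)))) / 2"
    by (intro divide_right_mono norm_triangle_ineq) auto
  also have "\<dots> \<le> (exp R + exp R) / 2"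
    using assms by (intro divide_right_mono add_mono) auto
  finally show ?thesis by simp
qed

lemma norm_sin_le_exp_abs_Im:
  assumes "\<bar>Im w\<bar> \<le> R"
  shows "cmod (sin w) \<le> exp R"
proof -
  have "cmod (sin w) = cmod (exp (\<i> * w) - exp (- (\<i> * w))) / 2"
    by (simp add: sin_exp_eq norm_divide norm_mult)
  also have "\<dots> \<le> (cmod (exp (\<i> * w)) + cmod (exp (- (\<i> * w)))) / 2"
    by (intro divide_right_mono norm_triangle_ineq4) auto
  also have "\<dots> \<le> (exp R + exp R) / 2"
    using assms by (intro divide_right_mono add_mono) auto
  finally show ?thesis by simp
qed

lemma norm_cos_diff_le_exp_abs_Im:
  "\<bar>Im w\<bar> \<le> R \<Longrightarrow> \<bar>Im z\<bar> \<le> R \<Longrightarrow> cmod (cos w - cos z) \<le> exp R * cmod (w - z)"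
  by (rule field_differentiable_bound[OF convex_abs_Im_le, where f' = "\<lambda>u. - sin u"])
     (auto intro!: derivative_eq_intros norm_sin_le_exp_abs_Im)

lemma norm_sin_diff_le_exp_abs_Im:
  "\<bar>Im w\<bar> \<le> R \<Longrightarrow> \<bar>Im z\<bar> \<le> R \<Longrightarrow> cmod (sin w - sin z) \<le> exp R * cmod (w - z)"
  by (rule field_differentiable_bound[OF convex_abs_Im_le, where f' = "\<lambda>u. cos u"])
     (auto intro!: derivative_eq_intros norm_cos_le_exp_abs_Im)

lemma norm_cos_taylor1_remainder_le_exp_abs_Im:
  assumes w: "\<bar>Im w\<bar> \<le> R" and z: "\<bar>Im z\<bar> \<le> R"
  shows "cmod (cos z - cos w + sin w * (z - w)) \<le> exp R * (cmod (z - w))\<^sup>2"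
proof -
  define F where "F = (\<lambda>i::nat. if i = 0 then cos else if i = 1 then (\<lambda>u. - sin u) else (\<lambda>u::complex. - cos u))"
  have "cmod (F 0 z - (\<Sum>i\<le>1. F i w * (z - w) ^ i / fact i)) \<le> exp R * cmod (z - w) ^ Suc 1 / fact 1"
  proof (rule complex_Taylor[OF convex_abs_Im_le])
    show "\<And>i u. u \<in> {z. \<bar>Im z\<bar> \<le> R} \<Longrightarrow> i \<le> 1 \<Longrightarrow>
        (F i has_field_derivative F (Suc i) u) (at u within {z. \<bar>Im z\<bar> \<le> R})"
      by (auto simp: F_def le_Suc_eq intro!: derivative_eq_intros)
    show "\<And>u. u \<in> {z. \<bar>Im z\<bar> \<le> R} \<Longrightarrow> cmod (F (Suc 1) u) \<le> exp R"
      by (auto simp: F_def norm_cos_le_exp_abs_Im)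
  qed (use w z in auto)
  then show ?thesis by (simp add: F_def algebra_simps power2_eq_square)
qed

lemma cos_psqrt_power2_mult: "cos (psqrt (z\<^sup>2) * w) = cos (z * w)"
proof -
  have "csqrt (z\<^sup>2) = z \<or> csqrt (z\<^sup>2) = - z"
    by (simp add: power2_eq_iff[symmetric])
  then have "psqrt (z\<^sup>2) = z \<or> psqrt (z\<^sup>2) = - z"
    unfolding psqrt_def by auto
  then show ?thesis by auto
qed

definition cos_mode :: "complex \<Rightarrow> real \<Rightarrow> complex" where
  "cos_mode r t = cos (r * of_real t)"

definition sin_mode :: "complex \<Rightarrow> real \<Rightarrow> complex" where
  "sin_mode r t = sin (r * of_real t)"

lemma continuous_on_cos_mode [continuous_intros]: "continuous_on S (cos_mode r)"
  unfolding cos_mode_def by (intro continuous_intros)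

lemma continuous_on_sin_mode [continuous_intros]: "continuous_on S (sin_mode r)"
  unfolding sin_mode_def by (intro continuous_intros)

lemma abs_Im_mult_of_real_le:
  "\<bar>Im r\<bar> \<le> W \<Longrightarrow> t \<in> {0..pi} \<Longrightarrow> \<bar>Im (r * of_real t)\<bar> \<le> W * pi"
  by (auto simp: abs_mult intro!: mult_mono)

lemma norm_mult_of_real_diff:
  "t \<ge> 0 \<Longrightarrow> cmod (r1 * of_real t - r2 * of_real t) = cmod (r1 - r2) * t"
  by (simp add: left_diff_distrib[symmetric] norm_mult)

lemma norm_cos_mode_diff_le:
  assumes "\<bar>Im r1\<bar> \<le> W" "\<bar>Im r2\<bar> \<le> W" "t \<in> {0..pi}"
  shows "cmod (cos_mode r1 t - cos_mode r2 t) \<le> exp (W * pi) * pi * cmod (r1 - r2)"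
proof -
  have "cmod (cos_mode r1 t - cos_mode r2 t) \<le> exp (W * pi) * cmod (r1 * of_real t - r2 * of_real t)"
    unfolding cos_mode_def by (rule norm_cos_diff_le_exp_abs_Im[OF abs_Im_mult_of_real_le abs_Im_mult_of_real_le]) (use assms in auto)
  also have "\<dots> = exp (W * pi) * (cmod (r1 - r2) * t)"
    using assms by (simp add: norm_mult_of_real_diff)
  also have "\<dots> \<le> exp (W * pi) * pi * cmod (r1 - r2)"
    using assms by (simp add: mult.commute mult.left_commute mult_right_mono)
  finally show ?thesis .
qed

lemma norm_sin_mode_diff_le:
  assumes "\<bar>Im r1\<bar> \<le> W" "\<bar>Im r2\<bar> \<le> W" "t \<in> {0..pi}"
  shows "cmod (sin_mode r1 t - sin_mode r2 t) \<le> exp (W * pi) * pi * cmod (r1 - r2)"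
proof -
  have "cmod (sin_mode r1 t - sin_mode r2 t) \<le> exp (W * pi) * cmod (r1 * of_real t - r2 * of_real t)"
    unfolding sin_mode_def by (rule norm_sin_diff_le_exp_abs_Im[OF abs_Im_mult_of_real_le abs_Im_mult_of_real_le]) (use assms in auto)
  also have "\<dots> = exp (W * pi) * (cmod (r1 - r2) * t)"
    using assms by (simp add: norm_mult_of_real_diff)
  also have "\<dots> \<le> exp (W * pi) * pi * cmod (r1 - r2)"
    using assms by (simp add: mult.commute mult.left_commute mult_right_mono)
  finally show ?thesis .
qed

lemma norm_cos_mode_taylor1_remainder_le:
  assumes "\<bar>Im r1\<bar> \<le> W" "\<bar>Im r2\<bar> \<le> W" "t \<in> {0..pi}"
  shows "cmod (cos_mode r1 t - cos_mode r2 t + sin_mode r2 t * (r1 - r2) * of_real t)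
    \<le> exp (W * pi) * pi\<^sup>2 * (cmod (r1 - r2))\<^sup>2"
proof -
  have "cmod (cos (r1 * of_real t) - cos (r2 * of_real t) + sin (r2 * of_real t) * (r1 * of_real t - r2 * of_real t))
      \<le> exp (W * pi) * (cmod (r1 * of_real t - r2 * of_real t))\<^sup>2"
    by (rule norm_cos_taylor1_remainder_le_exp_abs_Im[OF abs_Im_mult_of_real_le abs_Im_mult_of_real_le])
       (use assms in auto)
  also have "cmod (r1 * of_real t - r2 * of_real t) = cmod (r1 - r2) * t"
    using assms by (simp add: norm_mult_of_real_diff)
  also have "exp (W * pi) * (cmod (r1 - r2) * t)\<^sup>2 \<le> exp (W * pi) * pi\<^sup>2 * (cmod (r1 - r2))\<^sup>2"
    using assms by (simp add: power_mult_distrib mult.commute mult.left_commute)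
      (rule mult_right_mono[OF power_mono], auto)
  finally show ?thesis
    by (simp add: cos_mode_def sin_mode_def left_diff_distrib[symmetric] mult.assoc)
qed

section \<open>Orthogonality on [0, pi]\<close>

lemma has_integral_real_antiderivative:
  fixes F f :: "real \<Rightarrow> real"
  assumes "a \<le> b" "\<And>t. (F has_real_derivative f t) (at t)"
  shows "(f has_integral (F b - F a)) {a..b}"
  by (rule fundamental_theorem_of_calculus[OF assms(1)])
     (metis assms(2) has_real_derivative_iff_has_vector_derivative has_vector_derivative_at_within)

lemma has_integral_cos_int_mult:
  fixes m :: int
  shows "((\<lambda>t. cos (of_int m * t)) has_integral (if m = 0 then pi else 0)) {0..pi}"
proof (cases "m = 0")
  case False
  define F :: "real \<Rightarrow> real" where "F t = sin (of_int m * t) / of_int m" for t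
  have "((\<lambda>t. cos (of_int m * t)) has_integral (F pi - F 0)) {0..pi}"
    by (rule has_integral_real_antiderivative)
       (use False in \<open>auto simp: F_def intro!: derivative_eq_intros\<close>)
  moreover have "F pi - F 0 = 0"
    by (simp add: F_def sin_times_pi_eq_0)
  ultimately show ?thesis using False by simp
qed (use has_integral_const_real[of "1::real" 0 pi] in simp)

lemma has_integral_cos_nat_mult_cos:
  fixes j l :: nat
  assumes "j \<ge> 1" "l \<ge> 1"
  shows "((\<lambda>t. cos (real j * t) * cos (real l * t)) has_integral (if j = l then pi/2 else 0)) {0..pi}"
proof -
  have eq: "cos (real j * t) * cos (real l * t)
      = cos (of_int (int j - int l) * t) / 2 + cos (of_int (int j + int l) * t) / 2" for t
    by (simp add: left_diff_distrib distrib_right cos_diff cos_add field_simps)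
  have "(if j = l then pi/2 else 0) = (if int j - int l = 0 then pi else 0) / 2 + (if int j + int l = 0 then pi else 0) / 2"
    using assms by auto
  then show ?thesis
    unfolding eq by (simp only:) (intro has_integral_add has_integral_divide has_integral_cos_int_mult)
qed

lemma has_integral_sin_nat_mult_sin:
  fixes j l :: nat
  assumes "j \<ge> 1" "l \<ge> 1"
  shows "((\<lambda>t. sin (real j * t) * sin (real l * t)) has_integral (if j = l then pi/2 else 0)) {0..pi}"
proof -
  have eq: "sin (real j * t) * sin (real l * t)
      = cos (of_int (int j - int l) * t) / 2 - cos (of_int (int j + int l) * t) / 2" for t
    by (simp add: left_diff_distrib distrib_right cos_diff cos_add field_simps)
  have "(if j = l then pi/2 else 0) = (if int j - int l = 0 then pi else 0) / 2 - (if int j + int l = 0 then pi else 0) / 2"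
    using assms by auto
  then show ?thesis
    unfolding eq by (simp only:) (intro has_integral_diff has_integral_divide has_integral_cos_int_mult)
qed

lemma has_integral_square_orthogonal_sum:
  fixes \<phi> :: "'a \<Rightarrow> real \<Rightarrow> real"
  assumes K: "finite K"
    and orth: "\<And>k l. k \<in> K \<Longrightarrow> l \<in> K \<Longrightarrow>
      ((\<lambda>t. \<phi> k t * \<phi> l t) has_integral (if k = l then pi/2 else 0)) {0..pi}"
  shows "((\<lambda>t. (\<Sum>k\<in>K. c k * \<phi> k t)\<^sup>2) has_integral (pi/2 * (\<Sum>k\<in>K. (c k)\<^sup>2))) {0..pi}"
proof -
  have eq: "(\<Sum>k\<in>K. c k * \<phi> k t)\<^sup>2 = (\<Sum>k\<in>K. \<Sum>l\<in>K. c k * c l * (\<phi> k t * \<phi> l t))" for t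
    by (simp add: power2_eq_square sum_product mult_ac)
  have "((\<lambda>t. \<Sum>k\<in>K. \<Sum>l\<in>K. c k * c l * (\<phi> k t * \<phi> l t)) has_integral
        (\<Sum>k\<in>K. \<Sum>l\<in>K. c k * c l * (if k = l then pi/2 else 0))) {0..pi}"
    by (intro has_integral_sum K has_integral_mult_right orth)
  moreover have "(\<Sum>k\<in>K. \<Sum>l\<in>K. c k * c l * (if k = l then pi/2 else 0)) = pi/2 * (\<Sum>k\<in>K. (c k)\<^sup>2)"
    using K by (simp add: if_distrib sum.delta sum_distrib_left power2_eq_square mult_ac cong: if_cong)
  ultimately show ?thesis by (simp add: eq)
qed

lemma has_integral_cmod_square_orthogonal_sum:
  fixes \<phi> :: "'a \<Rightarrow> real \<Rightarrow> real" and u :: "'a \<Rightarrow> complex"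
  assumes K: "finite K"
    and orth: "\<And>k l. k \<in> K \<Longrightarrow> l \<in> K \<Longrightarrow>
      ((\<lambda>t. \<phi> k t * \<phi> l t) has_integral (if k = l then pi/2 else 0)) {0..pi}"
  shows "((\<lambda>t. (cmod (\<Sum>k\<in>K. u k * of_real (\<phi> k t)))\<^sup>2) has_integral
    (pi/2 * (\<Sum>k\<in>K. (cmod (u k))\<^sup>2))) {0..pi}"
proof -
  have eq: "(cmod (\<Sum>k\<in>K. u k * of_real (\<phi> k t)))\<^sup>2
      = (\<Sum>k\<in>K. Re (u k) * \<phi> k t)\<^sup>2 + (\<Sum>k\<in>K. Im (u k) * \<phi> k t)\<^sup>2" for t
    by (simp add: cmod_power2)
  have "((\<lambda>t. (\<Sum>k\<in>K. Re (u k) * \<phi> k t)\<^sup>2 + (\<Sum>k\<in>K. Im (u k) * \<phi> k t)\<^sup>2) has_integral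
      (pi/2 * (\<Sum>k\<in>K. (Re (u k))\<^sup>2) + pi/2 * (\<Sum>k\<in>K. (Im (u k))\<^sup>2))) {0..pi}"
    by (intro has_integral_add has_integral_square_orthogonal_sum K orth)
  moreover have "pi/2 * (\<Sum>k\<in>K. (Re (u k))\<^sup>2) + pi/2 * (\<Sum>k\<in>K. (Im (u k))\<^sup>2)
      = pi/2 * (\<Sum>k\<in>K. (cmod (u k))\<^sup>2)"
    by (simp add: cmod_power2 sum.distrib distrib_left)
  ultimately show ?thesis unfolding eq by (metis (no_types, lifting))
qed

section \<open>Expansions in the model modes\<close>

lemma rho_t_above: "\<not> k \<le> Suc p \<Longrightarrow> rho_t p k = of_real (real (k - Suc p))"
  by (simp add: rho_t_def of_nat_diff)

lemma cos_mode_rho_t_above: "\<not> k \<le> Suc p \<Longrightarrow> cos_mode (rho_t p k) t = of_real (cos (real (k - Suc p) * t))"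
  by (simp add: cos_mode_def rho_t_above cos_of_real[symmetric] del: of_nat_diff)

lemma sin_mode_rho_t_above: "\<not> k \<le> Suc p \<Longrightarrow> sin_mode (rho_t p k) t = of_real (sin (real (k - Suc p) * t))"
  by (simp add: sin_mode_def rho_t_above sin_of_real[symmetric] del: of_nat_diff)

lemma cos_mode_rho_t_below: "k \<le> Suc p \<Longrightarrow> cos_mode (rho_t p k) t = 1"
  by (simp add: cos_mode_def rho_t_def)

lemma sin_mode_rho_t_below: "k \<le> Suc p \<Longrightarrow> sin_mode (rho_t p k) t = 0"
  by (simp add: sin_mode_def rho_t_def)

lemma Im_rho_t [simp]: "Im (rho_t p k) = 0"
  by (simp add: rho_t_def)

lemma norm_alpha_t_le_1: "cmod (alpha_t p k) \<le> 1"
proof -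
  have "1/pi \<le> 1" "2/pi \<le> 1" using pi_gt3 by (auto simp: field_simps)
  then show ?thesis by (auto simp: alpha_t_def norm_divide)
qed

lemma has_integral_cos_shift_mult_cos:
  assumes "\<not> k \<le> Suc p" "\<not> l \<le> Suc p"
  shows "((\<lambda>t. cos (real (k - Suc p) * t) * cos (real (l - Suc p) * t))
    has_integral (if k = l then pi/2 else 0)) {0..pi}"
proof -
  have e: "(k - Suc p = l - Suc p) = (k = l)" "1 \<le> k - Suc p" "1 \<le> l - Suc p"
    using assms by auto
  show ?thesis using has_integral_cos_nat_mult_cos[OF e(2,3)] unfolding e(1) .
qed

lemma has_integral_sin_shift_mult_sin:
  assumes "\<not> k \<le> Suc p" "\<not> l \<le> Suc p"
  shows "((\<lambda>t. sin (real (k - Suc p) * t) * sin (real (l - Suc p) * t))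
    has_integral (if k = l then pi/2 else 0)) {0..pi}"
proof -
  have e: "(k - Suc p = l - Suc p) = (k = l)" "1 \<le> k - Suc p" "1 \<le> l - Suc p"
    using assms by auto
  show ?thesis using has_integral_sin_nat_mult_sin[OF e(2,3)] unfolding e(1) .
qed

lemma cmod_sum_square_le_card_mult: "(cmod (\<Sum>k\<in>K. u k))\<^sup>2 \<le> card K * (\<Sum>k\<in>K. (cmod (u k))\<^sup>2)"
proof -
  have "(cmod (\<Sum>k\<in>K. u k))\<^sup>2 \<le> (\<Sum>k\<in>K. cmod (u k))\<^sup>2"
    by (rule power_mono[OF norm_sum norm_ge_zero])
  also have "\<dots> \<le> (\<Sum>k\<in>K. (cmod (u k))\<^sup>2) * card K"
    by (rule sum_squared_le_sum_of_squares)
  finally show ?thesis by (simp add: mult.commute)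
qed

lemma norm_add3_le: "norm (a + b + c) \<le> norm a + norm b + norm c"
  for a b c :: "'a::real_normed_vector"
  by (rule order_trans[OF norm_triangle_ineq add_right_mono[OF norm_triangle_ineq]])

lemma square_add_le_2: "(a + b)\<^sup>2 \<le> 2 * a\<^sup>2 + 2 * b\<^sup>2" for a b :: real
proof -
  have "0 \<le> (a - b)\<^sup>2" by simp
  then show ?thesis by (simp add: power2_eq_square algebra_simps)
qed

lemma square_sum3_le: "(a + b + c)\<^sup>2 \<le> 3 * (a\<^sup>2 + b\<^sup>2 + c\<^sup>2)" for a b c :: real
proof -
  have "0 \<le> (a-b)\<^sup>2 + (a-c)\<^sup>2 + (b-c)\<^sup>2" by simp
  then show ?thesis by (simp add: power2_eq_square algebra_simps)
qed

lemma square_sum4_le: "(a + b + c + d)\<^sup>2 \<le> 4 * (a\<^sup>2 + b\<^sup>2 + c\<^sup>2 + d\<^sup>2)" for a b c d :: real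
proof -
  have "0 \<le> (a-b)\<^sup>2 + (a-c)\<^sup>2 + (a-d)\<^sup>2 + (b-c)\<^sup>2 + (b-d)\<^sup>2 + (c-d)\<^sup>2" by simp
  then show ?thesis by (simp add: power2_eq_square algebra_simps)
qed

lemma mode_expansion_constant_le:
  fixes SU SV SW :: real
  assumes "SU \<ge> 0" "SV \<ge> 0" "SW \<ge> 0"
  shows "4 * (pi * (real p + 2) * SU + pi/2 * SU + pi\<^sup>2 * (pi/2 * SV) + pi * SW)
    \<le> 200 * (real p + 1) * (SU + SV + SW)"
proof -
  have pi4: "pi \<le> 4" using pi_less_4 by simp
  have "pi ^ 3 \<le> 4 ^ 3" by (rule power_mono[OF pi4]) simp
  then have "pi ^ 3 * SV \<le> 4 ^ 3 * SV"
    using assms by (intro mult_right_mono) auto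
  then have hV: "pi\<^sup>2 * (pi/2 * SV) \<le> 32 * SV"
    by (simp add: power2_eq_square power3_eq_cube mult_ac)
  have hU: "pi * (real p + 2) * SU \<le> 4 * (real p + 2) * SU" "pi/2 * SU \<le> 2 * SU"
    and hW: "pi * SW \<le> 4 * SW"
    using assms pi4 by (intro mult_right_mono; simp)+
  have "4 * (pi * (real p + 2) * SU + pi/2 * SU + pi\<^sup>2 * (pi/2 * SV) + pi * SW)
      \<le> 4 * (4 * (real p + 2) * SU + 2 * SU + 32 * SV + 4 * SW)"
    by (intro mult_left_mono add_mono hU hV hW) simp
  also have "\<dots> \<le> 200 * (real p + 1) * (SU + SV + SW)"
  proof -
    have "4 * (4 * (real p + 2) * SU + 2 * SU + 32 * SV + 4 * SW)
        + ((184 * real p + 160) * SU + (200 * real p + 72) * SV + (200 * real p + 184) * SW)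
        = 200 * (real p + 1) * (SU + SV + SW)"
      by (simp add: algebra_simps)
    moreover have "0 \<le> (184 * real p + 160) * SU + (200 * real p + 72) * SV + (200 * real p + 184) * SW"
      using assms by simp
    ultimately show ?thesis by linarith
  qed
  finally show ?thesis .
qed

lemma sum_modes_rho_t_eq:
  assumes "finite K"
  shows "(\<Sum>k\<in>K. u k * cos_mode (rho_t p k) t + v k * of_real t * sin_mode (rho_t p k) t)
    = (\<Sum>k\<in>{k\<in>K. k \<le> Suc p}. u k)
      + (\<Sum>k\<in>{k\<in>K. \<not> k \<le> Suc p}. u k * of_real (cos (real (k - Suc p) * t)))
      + of_real t * (\<Sum>k\<in>{k\<in>K. \<not> k \<le> Suc p}. v k * of_real (sin (real (k - Suc p) * t)))"
proof -
  let ?f = "\<lambda>k. u k * cos_mode (rho_t p k) t + v k * of_real t * sin_mode (rho_t p k) t"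
  have "(\<Sum>k\<in>K. ?f k) = (\<Sum>k\<in>{k\<in>K. k \<le> Suc p}. ?f k) + (\<Sum>k\<in>{k\<in>K. \<not> k \<le> Suc p}. ?f k)"
    using assms by (subst sum.union_disjoint[symmetric]) (auto intro: sum.cong)
  also have "(\<Sum>k\<in>{k\<in>K. k \<le> Suc p}. ?f k) = (\<Sum>k\<in>{k\<in>K. k \<le> Suc p}. u k)"
    by (auto simp: cos_mode_rho_t_below sin_mode_rho_t_below intro!: sum.cong)
  also have "(\<Sum>k\<in>{k\<in>K. \<not> k \<le> Suc p}. ?f k)
      = (\<Sum>k\<in>{k\<in>K. \<not> k \<le> Suc p}. u k * of_real (cos (real (k - Suc p) * t)))
        + of_real t * (\<Sum>k\<in>{k\<in>K. \<not> k \<le> Suc p}. v k * of_real (sin (real (k - Suc p) * t)))"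
    by (auto simp: cos_mode_rho_t_above sin_mode_rho_t_above sum.distrib sum_distrib_left mult_ac
        simp del: of_nat_diff intro!: sum.cong)
  finally show ?thesis by (simp add: add.assoc)
qed

lemma norm_add4_square_le:
  fixes a b c w :: complex
  assumes t: "t \<in> {0..pi}" and w: "cmod w \<le> W"
  shows "(cmod (a + b + of_real t * c + w))\<^sup>2 \<le> 4 * ((cmod a)\<^sup>2 + (cmod b)\<^sup>2 + pi\<^sup>2 * (cmod c)\<^sup>2 + W\<^sup>2)"
proof -
  have "cmod (a + b + of_real t * c + w) \<le> cmod a + cmod b + cmod (of_real t * c) + cmod w"
    by (intro order_trans[OF norm_triangle_ineq] add_mono order_refl)
  moreover have "cmod (of_real t * c) = t * cmod c"
    using t by (simp add: norm_mult)
  ultimately have "cmod (a + b + of_real t * c + w) \<le> cmod a + cmod b + t * cmod c + W"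
    using w by linarith
  then have "(cmod (a + b + of_real t * c + w))\<^sup>2 \<le> 4 * ((cmod a)\<^sup>2 + (cmod b)\<^sup>2 + (t * cmod c)\<^sup>2 + W\<^sup>2)"
    by (rule order_trans[OF power_mono[OF _ norm_ge_zero] square_sum4_le])
  also have "(t * cmod c)\<^sup>2 \<le> pi\<^sup>2 * (cmod c)\<^sup>2"
    using t by (auto simp: power_mult_distrib intro!: mult_right_mono power_mono)
  finally show ?thesis by simp
qed

text \<open>The modes with k \<le> p + 1 all equal the constant 1, so only their sum can be controlled, at the
  price of the factor p + 2; the remaining modes are orthogonal on [0, pi].\<close>
lemma integral_mode_expansion_le:
  fixes u v :: "nat \<Rightarrow> complex" and w :: "nat \<Rightarrow> real \<Rightarrow> complex"
  assumes K: "finite K"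
    and u: "\<And>k. k \<in> K \<Longrightarrow> cmod (u k) \<le> U k"
    and v: "\<And>k. k \<in> K \<Longrightarrow> cmod (v k) \<le> V k"
    and w: "\<And>k t. k \<in> K \<Longrightarrow> t \<in> {0..pi} \<Longrightarrow> cmod (w k t) \<le> W k"
    and wc: "\<And>k. k \<in> K \<Longrightarrow> continuous_on {0..pi} (w k)"
  shows "integral {0..pi} (\<lambda>t. (cmod (\<Sum>k\<in>K. u k * cos_mode (rho_t p k) t
             + v k * of_real t * sin_mode (rho_t p k) t + w k t))\<^sup>2)
    \<le> 200 * (real p + 1) * ((\<Sum>k\<in>K. (U k)\<^sup>2) + (\<Sum>k\<in>K. (V k)\<^sup>2) + (\<Sum>k\<in>K. W k)\<^sup>2)"
proof -
  define K0 where "K0 = {k\<in>K. k \<le> Suc p}"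
  define K1 where "K1 = {k\<in>K. \<not> k \<le> Suc p}"
  have fin: "finite K1" using K by (simp add: K1_def)
  define SU where "SU = (\<Sum>k\<in>K. (U k)\<^sup>2)"
  define SV where "SV = (\<Sum>k\<in>K. (V k)\<^sup>2)"
  define SW where "SW = (\<Sum>k\<in>K. W k)\<^sup>2"
  have su: "(\<Sum>k\<in>K'. (cmod (u k))\<^sup>2) \<le> SU" if "K' \<subseteq> K" for K'
    unfolding SU_def using that u K
    by (intro order_trans[OF sum_mono2 sum_mono] power_mono) (auto intro: order_trans[OF norm_ge_zero])
  have sv: "(\<Sum>k\<in>K1. (cmod (v k))\<^sup>2) \<le> SV"
    unfolding SV_def using v K
    by (intro order_trans[OF sum_mono2 sum_mono] power_mono) (auto simp: K1_def intro: order_trans[OF norm_ge_zero])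
  define A where "A = (\<Sum>k\<in>K0. u k)"
  define B where "B t = (\<Sum>k\<in>K1. u k * of_real (cos (real (k - Suc p) * t)))" for t
  define C where "C t = (\<Sum>k\<in>K1. v k * of_real (sin (real (k - Suc p) * t)))" for t
  define G where "G t = (\<Sum>k\<in>K. u k * cos_mode (rho_t p k) t + v k * of_real t * sin_mode (rho_t p k) t + w k t)" for t
  have G_le: "(cmod (G t))\<^sup>2 \<le> 4 * ((cmod A)\<^sup>2 + (cmod (B t))\<^sup>2 + pi\<^sup>2 * (cmod (C t))\<^sup>2 + (\<Sum>k\<in>K. W k)\<^sup>2)"
    if t: "t \<in> {0..pi}" for t
  proof -
    have "G t = (\<Sum>k\<in>K. u k * cos_mode (rho_t p k) t + v k * of_real t * sin_mode (rho_t p k) t)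
        + (\<Sum>k\<in>K. w k t)"
      unfolding G_def by (rule sum.distrib)
    also have "(\<Sum>k\<in>K. u k * cos_mode (rho_t p k) t + v k * of_real t * sin_mode (rho_t p k) t)
        = A + B t + of_real t * C t"
      unfolding A_def B_def C_def K0_def K1_def by (rule sum_modes_rho_t_eq[OF K])
    finally have "G t = A + B t + of_real t * C t + (\<Sum>k\<in>K. w k t)" .
    moreover have "cmod (\<Sum>k\<in>K. w k t) \<le> (\<Sum>k\<in>K. W k)"
      by (rule order_trans[OF norm_sum sum_mono]) (use w t in auto)
    ultimately show ?thesis using norm_add4_square_le[OF t] by simp
  qed
  have "((\<lambda>t. (cmod (B t))\<^sup>2) has_integral (pi/2 * (\<Sum>k\<in>K1. (cmod (u k))\<^sup>2))) {0..pi}"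
    unfolding B_def
    by (rule has_integral_cmod_square_orthogonal_sum[OF fin])
       (rule has_integral_cos_shift_mult_cos, auto simp: K1_def)
  moreover have "((\<lambda>t. (cmod (C t))\<^sup>2) has_integral (pi/2 * (\<Sum>k\<in>K1. (cmod (v k))\<^sup>2))) {0..pi}"
    unfolding C_def
    by (rule has_integral_cmod_square_orthogonal_sum[OF fin])
       (rule has_integral_sin_shift_mult_sin, auto simp: K1_def)
  ultimately have "((\<lambda>t. 4 * ((cmod A)\<^sup>2 + (cmod (B t))\<^sup>2 + pi\<^sup>2 * (cmod (C t))\<^sup>2 + (\<Sum>k\<in>K. W k)\<^sup>2)) has_integral
      4 * (pi * (cmod A)\<^sup>2 + pi/2 * (\<Sum>k\<in>K1. (cmod (u k))\<^sup>2)
        + pi\<^sup>2 * (pi/2 * (\<Sum>k\<in>K1. (cmod (v k))\<^sup>2)) + pi * SW)) {0..pi}"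
    using has_integral_const_real[of "(cmod A)\<^sup>2" 0 pi] has_integral_const_real[of SW 0 pi]
    by (intro has_integral_mult_right has_integral_add) (auto simp: SW_def)
  moreover have "continuous_on {0..pi} (\<lambda>t. (cmod (G t))\<^sup>2)"
    unfolding G_def using wc by (intro continuous_intros) auto
  ultimately have "integral {0..pi} (\<lambda>t. (cmod (G t))\<^sup>2) \<le>
      4 * (pi * (cmod A)\<^sup>2 + pi/2 * (\<Sum>k\<in>K1. (cmod (u k))\<^sup>2)
        + pi\<^sup>2 * (pi/2 * (\<Sum>k\<in>K1. (cmod (v k))\<^sup>2)) + pi * SW)"
    using G_le by (intro has_integral_le[OF integrable_integral[OF integrable_continuous_real]]) auto
  also have "\<dots> \<le> 4 * (pi * (real p + 2) * SU + pi/2 * SU + pi\<^sup>2 * (pi/2 * SV) + pi * SW)"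
  proof -
    have "card K0 \<le> card {..Suc p}"
      by (rule card_mono) (auto simp: K0_def)
    then have "(cmod A)\<^sup>2 \<le> (real p + 2) * SU"
      using order_trans[OF cmod_sum_square_le_card_mult[of u K0] mult_mono[OF _ su]]
      by (auto simp: A_def K0_def sum_nonneg)
    then show ?thesis
      using su[of K1] sv by (auto simp: K1_def intro!: add_mono mult_left_mono)
  qed
  also have "\<dots> \<le> 200 * (real p + 1) * (SU + SV + SW)"
    by (rule mode_expansion_constant_le) (auto simp: SU_def SV_def SW_def sum_nonneg)
  finally show ?thesis unfolding G_def SU_def SV_def SW_def .
qed

section \<open>Cauchy-Schwarz and Bessel inequalities\<close>

lemma square_le_mult_of_quadratic_bound:
  fixes X A B :: real
  assumes X: "X \<ge> 0" and A: "A \<ge> 0" and B: "B \<ge> 0"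
    and H: "\<And>e. e > 0 \<Longrightarrow> 2 * e * X \<le> e\<^sup>2 * A + B"
  shows "X\<^sup>2 \<le> A * B"
proof (cases "X = 0")
  case True then show ?thesis using A B by simp
next
  case False
  then have Xp: "X > 0" using X by simp
  show ?thesis
  proof (cases "A = 0")
    case True
    have "2 * ((B+1)/(2*X)) * X \<le> ((B+1)/(2*X))\<^sup>2 * A + B"
      by (rule H) (use Xp B in auto)
    then have "B + 1 \<le> B" using True Xp by (simp add: field_simps)
    then show ?thesis by simp
  next
    case False
    then have Ap: "A > 0" using A by simp
    have "2 * (X/A) * X \<le> (X/A)\<^sup>2 * A + B"
      by (rule H) (use Xp Ap in auto)
    then have "X\<^sup>2 / A \<le> B" using Ap by (simp add: field_simps power2_eq_square)
    then show ?thesis using Ap by (simp add: field_simps mult.commute)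
  qed
qed

lemma norm_integral_mult_square_le:
  fixes u v :: "real \<Rightarrow> complex"
  assumes cu: "continuous_on {a..b} u" and cv: "continuous_on {a..b} v"
  shows "(cmod (integral {a..b} (\<lambda>t. u t * v t)))\<^sup>2 \<le>
     integral {a..b} (\<lambda>t. (cmod (u t))\<^sup>2) * integral {a..b} (\<lambda>t. (cmod (v t))\<^sup>2)"
proof (rule square_le_mult_of_quadratic_bound)
  have iu: "(\<lambda>t. (cmod (u t))\<^sup>2) integrable_on {a..b}"
    by (intro integrable_continuous_real continuous_intros cu)
  have iv: "(\<lambda>t. (cmod (v t))\<^sup>2) integrable_on {a..b}"
    by (intro integrable_continuous_real continuous_intros cv)
  have iuv: "(\<lambda>t. u t * v t) integrable_on {a..b}"
    by (intro integrable_continuous_interval continuous_intros cu cv)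
  have iuv': "(\<lambda>t. cmod (u t) * cmod (v t)) integrable_on {a..b}"
    by (intro integrable_continuous_real continuous_intros cu cv)
  show "integral {a..b} (\<lambda>t. (cmod (u t))\<^sup>2) \<ge> 0"
    by (rule integral_nonneg[OF iu]) auto
  show "integral {a..b} (\<lambda>t. (cmod (v t))\<^sup>2) \<ge> 0"
    by (rule integral_nonneg[OF iv]) auto
  show "cmod (integral {a..b} (\<lambda>t. u t * v t)) \<ge> 0" by simp
  fix e :: real assume e: "e > 0"
  have "cmod (integral {a..b} (\<lambda>t. u t * v t)) \<le> integral {a..b} (\<lambda>t. cmod (u t) * cmod (v t))"
    by (rule integral_norm_bound_integral[OF iuv iuv']) (simp add: norm_mult)
  then have "2 * e * cmod (integral {a..b} (\<lambda>t. u t * v t)) \<le> integral {a..b} (\<lambda>t. 2 * e * (cmod (u t) * cmod (v t)))"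
    using e by simp
  also have "\<dots> \<le> integral {a..b} (\<lambda>t. e\<^sup>2 * (cmod (u t))\<^sup>2 + (cmod (v t))\<^sup>2)"
  proof (rule integral_le)
    show "(\<lambda>t. 2 * e * (cmod (u t) * cmod (v t))) integrable_on {a..b}"
      by (intro integrable_continuous_real continuous_intros cu cv)
    show "(\<lambda>t. e\<^sup>2 * (cmod (u t))\<^sup>2 + (cmod (v t))\<^sup>2) integrable_on {a..b}"
      by (intro integrable_continuous_real continuous_intros cu cv)
    fix t
    have "0 \<le> (e * cmod (u t) - cmod (v t))\<^sup>2" by simp
    then show "2 * e * (cmod (u t) * cmod (v t)) \<le> e\<^sup>2 * (cmod (u t))\<^sup>2 + (cmod (v t))\<^sup>2"
      by (simp add: power2_eq_square algebra_simps)
  qed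
  also have "\<dots> = e\<^sup>2 * integral {a..b} (\<lambda>t. (cmod (u t))\<^sup>2) + integral {a..b} (\<lambda>t. (cmod (v t))\<^sup>2)"
  proof -
    have iu2: "(\<lambda>t. e\<^sup>2 * (cmod (u t))\<^sup>2) integrable_on {a..b}"
      by (intro integrable_continuous_real continuous_intros cu)
    show ?thesis by (simp add: integral_add[OF iu2 iv] integral_mult_right)
  qed
  finally show "2 * e * cmod (integral {a..b} (\<lambda>t. u t * v t)) \<le> e\<^sup>2 * integral {a..b} (\<lambda>t. (cmod (u t))\<^sup>2) + integral {a..b} (\<lambda>t. (cmod (v t))\<^sup>2)" .
qed

lemma integral_cmod_square_le_const:
  fixes u :: "real \<Rightarrow> complex"
  assumes uc: "continuous_on {0..x} u" and x: "0 \<le> x" "x \<le> pi" and b: "\<And>t. t \<in> {0..x} \<Longrightarrow> cmod (u t) \<le> c"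
  shows "integral {0..x} (\<lambda>t. (cmod (u t))\<^sup>2) \<le> pi * c\<^sup>2"
proof -
  have c0: "c \<ge> 0" using b[of 0] x by (auto intro: order_trans[OF norm_ge_zero])
  have "integral {0..x} (\<lambda>t. (cmod (u t))\<^sup>2) \<le> integral {0..x} (\<lambda>t. c\<^sup>2)"
    by (rule integral_le) (auto intro!: integrable_continuous_real continuous_intros uc power_mono b)
  also have "\<dots> = x * c\<^sup>2" using x by simp
  also have "\<dots> \<le> pi * c\<^sup>2" using x by (intro mult_right_mono) auto
  finally show ?thesis .
qed

lemma integral_cmod_square_mono:
  fixes g :: "real \<Rightarrow> complex"
  assumes gc: "continuous_on {0..pi} g" and x: "0 \<le> x" "x \<le> pi"
  shows "integral {0..x} (\<lambda>t. (cmod (g t))\<^sup>2) \<le> integral {0..pi} (\<lambda>t. (cmod (g t))\<^sup>2)"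
proof (rule integral_subset_le)
  have gc': "continuous_on {0..x} g" by (rule continuous_on_subset[OF gc]) (use x in auto)
  show "(\<lambda>t. (cmod (g t))\<^sup>2) integrable_on {0..x}" by (intro integrable_continuous_real continuous_intros gc')
  show "(\<lambda>t. (cmod (g t))\<^sup>2) integrable_on {0..pi}" by (intro integrable_continuous_real continuous_intros gc)
qed (use x in auto)

lemma integral_cmod_square_nonneg:
  fixes g :: "real \<Rightarrow> complex"
  assumes gc: "continuous_on {a..b} g"
  shows "integral {a..b} (\<lambda>t. (cmod (g t))\<^sup>2) \<ge> 0"
  by (rule integral_nonneg) (auto intro!: integrable_continuous_real continuous_intros gc)

lemma norm_integral_mult_square_le_bound:
  fixes u g :: "real \<Rightarrow> complex"
  assumes uc: "continuous_on {0..x} u" and gc: "continuous_on {0..pi} g" and x: "0 \<le> x" "x \<le> pi"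
    and b: "\<And>t. t \<in> {0..x} \<Longrightarrow> cmod (u t) \<le> c"
  shows "(cmod (integral {0..x} (\<lambda>t. u t * g t)))\<^sup>2 \<le> pi * c\<^sup>2 * integral {0..pi} (\<lambda>t. (cmod (g t))\<^sup>2)"
proof -
  have gc': "continuous_on {0..x} g" by (rule continuous_on_subset[OF gc]) (use x in auto)
  have "(cmod (integral {0..x} (\<lambda>t. u t * g t)))\<^sup>2 \<le> integral {0..x} (\<lambda>t. (cmod (u t))\<^sup>2) * integral {0..x} (\<lambda>t. (cmod (g t))\<^sup>2)"
    by (rule norm_integral_mult_square_le[OF uc gc'])
  also have "\<dots> \<le> (pi * c\<^sup>2) * integral {0..pi} (\<lambda>t. (cmod (g t))\<^sup>2)"
    by (intro mult_mono integral_cmod_square_le_const[OF uc x b] integral_cmod_square_mono[OF gc x] integral_cmod_square_nonneg gc') auto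
  finally show ?thesis .
qed

text \<open>Pairing g with s = sum of cnj(a_n) cos(rho~_n t) gives S = sum of |a_n|^2 = integral of s g, and
  Cauchy-Schwarz together with the bound on the L2 norm of s gives S^2 \<le> C S (integral of |g|^2).\<close>
lemma bessel_cos_mode_rho_t:
  fixes g :: "real \<Rightarrow> complex"
  assumes N: "finite N" and gc: "continuous_on {0..pi} g" and x: "0 \<le> x" "x \<le> pi"
  shows "(\<Sum>n\<in>N. (cmod (integral {0..x} (\<lambda>t. cos_mode (rho_t p n) t * g t)))\<^sup>2)
     \<le> 200 * (real p + 1) * integral {0..x} (\<lambda>t. (cmod (g t))\<^sup>2)"
proof -
  define a where "a n = integral {0..x} (\<lambda>t. cos_mode (rho_t p n) t * g t)" for n
  define s where "s t = (\<Sum>n\<in>N. cnj (a n) * cos_mode (rho_t p n) t)" for t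
  define S where "S = (\<Sum>n\<in>N. (cmod (a n))\<^sup>2)"
  define G where "G = integral {0..x} (\<lambda>t. (cmod (g t))\<^sup>2)"
  define C where "C = 200 * (real p + 1)"
  have gc': "continuous_on {0..x} g" by (rule continuous_on_subset[OF gc]) (use x in auto)
  have sc: "continuous_on {0..pi} s" unfolding s_def by (intro continuous_intros)
  have S0: "S \<ge> 0" by (simp add: S_def sum_nonneg)
  have G0: "G \<ge> 0" unfolding G_def by (rule integral_cmod_square_nonneg[OF gc'])
  have "integral {0..x} (\<lambda>t. s t * g t) = (\<Sum>n\<in>N. cnj (a n) * a n)"
  proof -
    have "integral {0..x} (\<lambda>t. s t * g t) = integral {0..x} (\<lambda>t. \<Sum>n\<in>N. cnj (a n) * (cos_mode (rho_t p n) t * g t))"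
      by (simp add: s_def sum_distrib_right mult.assoc)
    also have "\<dots> = (\<Sum>n\<in>N. integral {0..x} (\<lambda>t. cnj (a n) * (cos_mode (rho_t p n) t * g t)))"
      by (rule integral_sum[OF N]) (auto intro!: integrable_continuous_interval continuous_intros gc')
    also have "\<dots> = (\<Sum>n\<in>N. cnj (a n) * a n)"
      by (simp add: a_def)
    finally show ?thesis .
  qed
  also have "\<dots> = of_real S"
    unfolding S_def of_real_sum complex_norm_square by (simp add: mult.commute)
  finally have Seq: "S = cmod (integral {0..x} (\<lambda>t. s t * g t))" using S0 by simp
  have "S\<^sup>2 \<le> integral {0..x} (\<lambda>t. (cmod (s t))\<^sup>2) * G"
    unfolding Seq G_def
    by (rule norm_integral_mult_square_le) (use sc x in \<open>auto intro: continuous_on_subset gc'\<close>)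
  also have "integral {0..x} (\<lambda>t. (cmod (s t))\<^sup>2) \<le> integral {0..pi} (\<lambda>t. (cmod (s t))\<^sup>2)"
    by (rule integral_cmod_square_mono[OF sc x])
  also have "integral {0..pi} (\<lambda>t. (cmod (s t))\<^sup>2) \<le> C * S"
  proof -
    have "integral {0..pi} (\<lambda>t. (cmod (\<Sum>n\<in>N. cnj (a n) * cos_mode (rho_t p n) t + 0 * of_real t * sin_mode (rho_t p n) t + 0))\<^sup>2)
       \<le> 200 * (real p + 1) * ((\<Sum>n\<in>N. (cmod (cnj (a n)))\<^sup>2) + (\<Sum>n\<in>N. (cmod (0::complex))\<^sup>2) + (\<Sum>n\<in>N. 0)\<^sup>2)"
      by (rule integral_mode_expansion_le[OF N]) auto
    then show ?thesis by (simp add: s_def C_def S_def)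
  qed
  finally have "S\<^sup>2 \<le> C * S * G" using G0 by (simp add: mult_right_mono)
  then have "S \<le> C * G"
    using S0 by (cases "S = 0") (auto simp: power2_eq_square mult.commute mult.left_commute G0 C_def)
  then show ?thesis by (simp add: a_def S_def C_def G_def)
qed

section \<open>The ball B_Omega\<close>

lemma xi_nonneg: "xi p lam al n \<ge> 0"
  by (simp add: xi_def)

lemma norm_rho_diff_le_xi: "cmod (rho_of lam k - rho_t p k) \<le> xi p lam al k"
  by (simp add: xi_def)

lemma norm_al_diff_le_xi: "cmod (al k - alpha_t p k) \<le> xi p lam al k"
  by (simp add: xi_def)

lemma in_Sp_summable_xi:
  assumes "in_Sp p lam al"
  shows "summable (\<lambda>n. (xi p lam al (Suc n))\<^sup>2)"
proof -
  let ?a = "\<lambda>n. (cmod (rho_of lam (Suc n) - of_real (real (Suc n) - real p - 1)))\<^sup>2"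
  let ?b = "\<lambda>n. (cmod (al (Suc n) - of_real (2 / pi)))\<^sup>2"
  have sa: "summable ?a" and sb: "summable ?b" using assms by (auto simp: in_Sp_def)
  show ?thesis
  proof (rule summable_comparison_test_ev)
    show "summable (\<lambda>n. 2 * ?a n + 2 * ?b n)" by (intro summable_add summable_mult sa sb)
    show "\<forall>\<^sub>F n in sequentially. norm ((xi p lam al (Suc n))\<^sup>2) \<le> 2 * ?a n + 2 * ?b n"
      unfolding eventually_sequentially
    proof (intro exI allI impI)
      fix n assume n: "Suc p \<le> n"
      have "xi p lam al (Suc n) = sqrt (?a n) + sqrt (?b n)"
        using n by (simp add: xi_def rho_t_def alpha_t_def)
      moreover have "(sqrt (?a n) + sqrt (?b n))\<^sup>2 \<le> 2 * ?a n + 2 * ?b n"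
      proof -
        have "0 \<le> (sqrt (?a n) - sqrt (?b n))\<^sup>2" by simp
        then show ?thesis by (simp add: power2_eq_square algebra_simps)
      qed
      ultimately show "norm ((xi p lam al (Suc n))\<^sup>2) \<le> 2 * ?a n + 2 * ?b n" by simp
    qed
  qed
qed

context
  fixes p \<Omega> lam al
  assumes B: "in_B p \<Omega> lam al"
begin

lemma in_B_summable_xi: "summable (\<lambda>n. (xi p lam al (Suc n))\<^sup>2)"
  using B in_Sp_summable_xi by (auto simp: in_B_def)

lemma in_B_suminf_xi_nonneg: "(\<Sum>n. (xi p lam al (Suc n))\<^sup>2) \<ge> 0"
  by (rule suminf_nonneg[OF in_B_summable_xi]) simp

lemma in_B_suminf_xi_le: "(\<Sum>n. (xi p lam al (Suc n))\<^sup>2) \<le> \<Omega>\<^sup>2"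
proof -
  have "sqrt (\<Sum>n. (xi p lam al (Suc n))\<^sup>2) \<le> \<Omega>"
    using B by (simp add: in_B_def)
  then show ?thesis
    using real_sqrt_pow2[OF in_B_suminf_xi_nonneg] power_mono[of "sqrt (\<Sum>n. (xi p lam al (Suc n))\<^sup>2)" \<Omega> 2]
    by simp
qed

lemma in_B_sum_xi_le:
  assumes "finite K" "\<And>k. k \<in> K \<Longrightarrow> k \<ge> 1"
  shows "(\<Sum>k\<in>K. (xi p lam al k)\<^sup>2) \<le> \<Omega>\<^sup>2"
proof -
  have inj: "inj_on (\<lambda>k. k - 1) K"
  proof (rule inj_onI)
    fix x y assume "x \<in> K" "y \<in> K" "x - 1 = y - 1"
    then show "x = y" using assms(2)[of x] assms(2)[of y] by linarith
  qed
  have "(\<Sum>k\<in>K. (xi p lam al k)\<^sup>2) = (\<Sum>j\<in>(\<lambda>k. k - 1) ` K. (xi p lam al (Suc j))\<^sup>2)"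
    unfolding sum.reindex[OF inj] o_def
  proof (intro sum.cong refl)
    fix k assume "k \<in> K"
    then have "Suc (k - 1) = k" using assms(2) by fastforce
    then show "(xi p lam al k)\<^sup>2 = (xi p lam al (Suc (k - 1)))\<^sup>2" by simp
  qed
  also have "\<dots> \<le> (\<Sum>n. (xi p lam al (Suc n))\<^sup>2)"
    using assms(1) by (intro sum_le_suminf[OF in_B_summable_xi]) auto
  finally show ?thesis using in_B_suminf_xi_le by linarith
qed

lemma in_B_Omega_nonneg: "\<Omega> \<ge> 0"
  using B in_B_suminf_xi_nonneg unfolding in_B_def by (meson order_trans real_sqrt_ge_zero)

lemma in_B_xi_le:
  assumes "k \<ge> 1"
  shows "xi p lam al k \<le> \<Omega>"
proof -
  have "(xi p lam al k)\<^sup>2 \<le> \<Omega>\<^sup>2" using in_B_sum_xi_le[of "{k}"] assms by simp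
  then show ?thesis using in_B_Omega_nonneg by (rule power2_le_imp_le)
qed

lemma in_B_abs_Im_rho_le:
  assumes "k \<ge> 1"
  shows "\<bar>Im (rho_of lam k)\<bar> \<le> \<Omega>"
proof -
  have "\<bar>Im (rho_of lam k)\<bar> = \<bar>Im (rho_of lam k - rho_t p k)\<bar>" by simp
  also have "\<dots> \<le> cmod (rho_of lam k - rho_t p k)" by (rule abs_Im_le_cmod)
  finally show ?thesis using norm_rho_diff_le_xi[of lam k p al] in_B_xi_le[OF assms] by linarith
qed

lemma in_B_norm_al_le:
  assumes "k \<ge> 1"
  shows "cmod (al k) \<le> 1 + \<Omega>"
proof -
  have "cmod (al k) \<le> cmod (alpha_t p k) + cmod (al k - alpha_t p k)"
    by (metis add.commute diff_add_cancel norm_triangle_ineq)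
  then show ?thesis
    using norm_alpha_t_le_1[of p k] norm_al_diff_le_xi[of al k p lam] in_B_xi_le[OF assms] by linarith
qed

end

definition data_dist :: "(nat \<Rightarrow> complex) \<Rightarrow> (nat \<Rightarrow> complex) \<Rightarrow> (nat \<Rightarrow> complex) \<Rightarrow> (nat \<Rightarrow> complex) \<Rightarrow> nat \<Rightarrow> real"
  where "data_dist lam1 al1 lam2 al2 k = cmod (rho_of lam1 k - rho_of lam2 k) + cmod (al1 k - al2 k)"

lemma data_dist_nonneg: "data_dist lam1 al1 lam2 al2 k \<ge> 0"
  by (simp add: data_dist_def)

lemma norm_rho_diff_le_data_dist: "cmod (rho_of lam1 k - rho_of lam2 k) \<le> data_dist lam1 al1 lam2 al2 k"
  by (simp add: data_dist_def)

lemma norm_rho_diff_le_xi_add: "cmod (rho_of lam1 k - rho_of lam2 k) \<le> xi p lam1 al1 k + xi p lam2 al2 k"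
  using norm_triangle_ineq4[of "rho_of lam1 k - rho_t p k" "rho_of lam2 k - rho_t p k"]
    norm_rho_diff_le_xi[of lam1 k p al1] norm_rho_diff_le_xi[of lam2 k p al2]
  by simp

lemma data_dist_le_xi_add: "data_dist lam1 al1 lam2 al2 k \<le> xi p lam1 al1 k + xi p lam2 al2 k"
  using norm_triangle_ineq4[of "rho_of lam1 k - rho_t p k" "rho_of lam2 k - rho_t p k"]
    norm_triangle_ineq4[of "al1 k - alpha_t p k" "al2 k - alpha_t p k"]
  by (simp add: data_dist_def xi_def)

lemma in_B_summable_data_dist:
  assumes "in_B p \<Omega> lam1 al1" "in_B p \<Omega> lam2 al2"
  shows "summable (\<lambda>n. (data_dist lam1 al1 lam2 al2 (Suc n))\<^sup>2)"
proof (rule summable_comparison_test'[where N = 0])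
  show "summable (\<lambda>n. 2 * (xi p lam1 al1 (Suc n))\<^sup>2 + 2 * (xi p lam2 al2 (Suc n))\<^sup>2)"
    by (intro summable_add summable_mult in_B_summable_xi[OF assms(1)] in_B_summable_xi[OF assms(2)])
  fix n
  have "(data_dist lam1 al1 lam2 al2 (Suc n))\<^sup>2 \<le> (xi p lam1 al1 (Suc n) + xi p lam2 al2 (Suc n))\<^sup>2"
    by (intro power_mono data_dist_le_xi_add data_dist_nonneg)
  also have "\<dots> \<le> 2 * (xi p lam1 al1 (Suc n))\<^sup>2 + 2 * (xi p lam2 al2 (Suc n))\<^sup>2"
    by (rule square_add_le_2)
  finally show "norm ((data_dist lam1 al1 lam2 al2 (Suc n))\<^sup>2)
      \<le> 2 * (xi p lam1 al1 (Suc n))\<^sup>2 + 2 * (xi p lam2 al2 (Suc n))\<^sup>2" by simp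
qed

section \<open>Integral representation of Q~ T^{-1}\<close>

definition QT_kernel_coef :: "nat \<Rightarrow> (nat \<Rightarrow> complex) \<Rightarrow> (nat \<Rightarrow> complex) \<Rightarrow> (nat \<Rightarrow> nat \<Rightarrow> complex) \<Rightarrow> nat \<Rightarrow> complex"
  where "QT_kernel_coef p lam al f k = al k * (rho_of lam k - rho_t p k) * f k 0 + (al k - alpha_t p k) * f k 1"

text \<open>The kernel is alpha_k (rhohat_k f_{k0} + f_{k1}) cos(rho_k t)
  - alpha~_k f_{k1} cos(rho~_k t), regrouped so that each coefficient is of order xi_k.\<close>
definition QT_kernel :: "nat \<Rightarrow> (nat \<Rightarrow> complex) \<Rightarrow> (nat \<Rightarrow> complex) \<Rightarrow> (nat \<Rightarrow> nat \<Rightarrow> complex) \<Rightarrow> nat \<Rightarrow> real \<Rightarrow> complex"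
  where "QT_kernel p lam al f k t = QT_kernel_coef p lam al f k * cos_mode (rho_of lam k) t
      + alpha_t p k * f k 1 * (cos_mode (rho_of lam k) t - cos_mode (rho_t p k) t)"

lemma continuous_on_QT_kernel [continuous_intros]: "continuous_on S (QT_kernel p lam al f k)"
  unfolding QT_kernel_def by (intro continuous_intros)

lemma Dt_power2_eq_integral: "Dt x (r1\<^sup>2) (r2\<^sup>2) = integral {0..x} (\<lambda>t. cos_mode r1 t * cos_mode r2 t)"
  by (simp add: Dt_def cos_mode_def cos_psqrt_power2_mult)

lemma QT_term_eq_integral:
  "QT_term p lam al x f n i k = integral {0..x} (\<lambda>t. cos_mode (rhoI p lam n i) t * QT_kernel p lam al f k t)"
proof -
  let ?c = "cos_mode (rhoI p lam n i)"
  have i1: "(\<lambda>t. ?c t * cos_mode (rho_of lam k) t) integrable_on {0..x}"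
    and i2: "(\<lambda>t. ?c t * cos_mode (rho_t p k) t) integrable_on {0..x}"
    by (intro integrable_continuous_interval continuous_intros)+
  have eq: "?c t * QT_kernel p lam al f k t =
     (al k * ((rho_of lam k - rho_t p k) * f k 0 + f k 1)) * (?c t * cos_mode (rho_of lam k) t)
     - (alpha_t p k * f k 1) * (?c t * cos_mode (rho_t p k) t)" for t
    by (simp add: QT_kernel_def QT_kernel_coef_def algebra_simps)
  have "integral {0..x} (\<lambda>t. ?c t * QT_kernel p lam al f k t) =
     (al k * ((rho_of lam k - rho_t p k) * f k 0 + f k 1)) * integral {0..x} (\<lambda>t. ?c t * cos_mode (rho_of lam k) t)
     - (alpha_t p k * f k 1) * integral {0..x} (\<lambda>t. ?c t * cos_mode (rho_t p k) t)"
    unfolding eq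
    by (simp add: integral_diff[OF integrable_on_mult_right[OF i1] integrable_on_mult_right[OF i2]] integral_mult_right)
  then show ?thesis
    by (simp add: QT_term_def Qt_def alI_def rhoI_def Dt_power2_eq_integral algebra_simps)
qed

lemma sum_QT_term_eq_integral:
  assumes "finite K"
  shows "(\<Sum>k\<in>K. QT_term p lam al x f n i k)
    = integral {0..x} (\<lambda>t. cos_mode (rhoI p lam n i) t * (\<Sum>k\<in>K. QT_kernel p lam al f k t))"
proof -
  have "(\<Sum>k\<in>K. QT_term p lam al x f n i k)
      = (\<Sum>k\<in>K. integral {0..x} (\<lambda>t. cos_mode (rhoI p lam n i) t * QT_kernel p lam al f k t))"
    by (simp add: QT_term_eq_integral)
  also have "\<dots> = integral {0..x} (\<lambda>t. \<Sum>k\<in>K. cos_mode (rhoI p lam n i) t * QT_kernel p lam al f k t)"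
    by (rule integral_sum[symmetric, OF assms]) (auto intro!: integrable_continuous_interval continuous_intros)
  finally show ?thesis by (simp add: sum_distrib_left)
qed

lemma norm_QT_kernel_coef_le:
  assumes B: "in_B p \<Omega> lam al" and k: "k \<ge> 1" and f: "\<And>i. i \<le> 1 \<Longrightarrow> cmod (f k i) \<le> M"
  shows "cmod (QT_kernel_coef p lam al f k) \<le> (2 + \<Omega>) * M * xi p lam al k"
proof -
  have M0: "M \<ge> 0" using f[of 0] by (meson norm_ge_zero order_trans le0)
  have "cmod (QT_kernel_coef p lam al f k) \<le> cmod (al k) * cmod (rho_of lam k - rho_t p k) * cmod (f k 0)
        + cmod (al k - alpha_t p k) * cmod (f k 1)"
    unfolding QT_kernel_coef_def by (metis norm_mult norm_triangle_ineq)
  also have "\<dots> \<le> (1 + \<Omega>) * xi p lam al k * M + xi p lam al k * M"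
    using in_B_norm_al_le[OF B k] in_B_Omega_nonneg[OF B] norm_rho_diff_le_xi norm_al_diff_le_xi
      f[of 0] f[of 1] M0 xi_nonneg
    by (intro add_mono mult_mono) auto
  finally show ?thesis by (simp add: algebra_simps)
qed

lemma norm_QT_kernel_coef_diff_le:
  assumes B1: "in_B p \<Omega> lam1 al1" and B2: "in_B p \<Omega> lam2 al2" and k: "k \<ge> 1"
    and f: "\<And>i. i \<le> 1 \<Longrightarrow> cmod (f k i) \<le> M"
  shows "cmod (QT_kernel_coef p lam1 al1 f k - QT_kernel_coef p lam2 al2 f k)
    \<le> (2 + \<Omega>) * M * data_dist lam1 al1 lam2 al2 k"
proof -
  have M0: "M \<ge> 0" using f[of 0] by (meson norm_ge_zero order_trans le0)
  define dr where "dr = cmod (rho_of lam1 k - rho_of lam2 k)"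
  define da where "da = cmod (al1 k - al2 k)"
  have "QT_kernel_coef p lam1 al1 f k - QT_kernel_coef p lam2 al2 f k =
     ((al1 k - al2 k) * (rho_of lam1 k - rho_t p k) + al2 k * (rho_of lam1 k - rho_of lam2 k)) * f k 0
     + (al1 k - al2 k) * f k 1"
    by (simp add: QT_kernel_coef_def algebra_simps)
  then have "cmod (QT_kernel_coef p lam1 al1 f k - QT_kernel_coef p lam2 al2 f k)
      \<le> (da * cmod (rho_of lam1 k - rho_t p k) + cmod (al2 k) * dr) * cmod (f k 0) + da * cmod (f k 1)"
    unfolding da_def dr_def
    by (auto simp: norm_mult intro!: order_trans[OF norm_triangle_ineq] add_mono mult_right_mono
        order_trans[OF norm_triangle_ineq[of "(al1 k - al2 k) * (rho_of lam1 k - rho_t p k)"]])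
  also have "\<dots> \<le> (da * \<Omega> + (1 + \<Omega>) * dr) * M + da * M"
    using in_B_norm_al_le[OF B2 k] norm_rho_diff_le_xi[of lam1 k p al1] in_B_xi_le[OF B1 k]
      in_B_Omega_nonneg[OF B1] f[of 0] f[of 1] M0
    unfolding da_def dr_def by (intro add_mono mult_mono) (auto intro: order_trans)
  also have "\<dots> \<le> (2 + \<Omega>) * M * (dr + da)"
    using M0 in_B_Omega_nonneg[OF B1] by (simp add: da_def dr_def algebra_simps mult_right_mono)
  finally show ?thesis by (simp add: dr_def da_def data_dist_def)
qed

definition QT_kernel_rem :: "nat \<Rightarrow> (nat \<Rightarrow> complex) \<Rightarrow> (nat \<Rightarrow> complex) \<Rightarrow> (nat \<Rightarrow> nat \<Rightarrow> complex) \<Rightarrow> nat \<Rightarrow> real \<Rightarrow> complex"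
  where "QT_kernel_rem p lam al f k t =
    QT_kernel_coef p lam al f k * (cos_mode (rho_of lam k) t - cos_mode (rho_t p k) t)
    + alpha_t p k * f k 1 * (cos_mode (rho_of lam k) t - cos_mode (rho_t p k) t
        + sin_mode (rho_t p k) t * (rho_of lam k - rho_t p k) * of_real t)"

lemma continuous_on_QT_kernel_rem [continuous_intros]: "continuous_on S (QT_kernel_rem p lam al f k)"
  unfolding QT_kernel_rem_def by (intro continuous_intros)

lemma QT_kernel_eq_mode_expansion:
  "QT_kernel p lam al f k t = QT_kernel_coef p lam al f k * cos_mode (rho_t p k) t
     + (- (alpha_t p k * f k 1 * (rho_of lam k - rho_t p k))) * of_real t * sin_mode (rho_t p k) t
     + QT_kernel_rem p lam al f k t"
  by (simp add: QT_kernel_def QT_kernel_rem_def algebra_simps)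

lemma norm_QT_kernel_rem_le:
  assumes B: "in_B p \<Omega> lam al" and k: "k \<ge> 1" and f: "\<And>i. i \<le> 1 \<Longrightarrow> cmod (f k i) \<le> M"
    and t: "t \<in> {0..pi}"
  shows "cmod (QT_kernel_rem p lam al f k t) \<le> M * exp (\<Omega> * pi) * pi * (2 + \<Omega> + pi) * (xi p lam al k)\<^sup>2"
proof -
  define E where "E = exp (\<Omega> * pi)"
  define \<xi> where "\<xi> = xi p lam al k"
  define d where "d = rho_of lam k - rho_t p k"
  have M0: "M \<ge> 0" using f[of 0] by (meson norm_ge_zero order_trans le0)
  have Im: "\<bar>Im (rho_of lam k)\<bar> \<le> \<Omega>" "\<bar>Im (rho_t p k)\<bar> \<le> \<Omega>"
    using in_B_abs_Im_rho_le[OF B k] in_B_Omega_nonneg[OF B] by auto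
  have d: "cmod d \<le> \<xi>" "0 \<le> \<xi>"
    by (simp_all add: d_def \<xi>_def norm_rho_diff_le_xi xi_nonneg)
  have "cmod (cos_mode (rho_of lam k) t - cos_mode (rho_t p k) t) \<le> E * pi * cmod d"
    using norm_cos_mode_diff_le[OF Im t] by (simp add: E_def d_def)
  also have "\<dots> \<le> E * pi * \<xi>"
    using d by (intro mult_left_mono) (auto simp: E_def)
  finally have lip: "cmod (cos_mode (rho_of lam k) t - cos_mode (rho_t p k) t) \<le> E * pi * \<xi>" .
  have "cmod (cos_mode (rho_of lam k) t - cos_mode (rho_t p k) t + sin_mode (rho_t p k) t * d * of_real t)
      \<le> E * pi\<^sup>2 * (cmod d)\<^sup>2"
    unfolding E_def d_def by (rule norm_cos_mode_taylor1_remainder_le[OF Im t])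
  also have "\<dots> \<le> E * pi\<^sup>2 * \<xi>\<^sup>2"
    using d by (intro mult_left_mono power_mono) (auto simp: E_def)
  finally have taylor: "cmod (cos_mode (rho_of lam k) t - cos_mode (rho_t p k) t + sin_mode (rho_t p k) t * d * of_real t)
      \<le> E * pi\<^sup>2 * \<xi>\<^sup>2" .
  have coef: "cmod (QT_kernel_coef p lam al f k) \<le> (2 + \<Omega>) * M * \<xi>"
    unfolding \<xi>_def by (rule norm_QT_kernel_coef_le[OF B k]) (rule f)
  have "cmod (QT_kernel_rem p lam al f k t)
      \<le> cmod (QT_kernel_coef p lam al f k) * cmod (cos_mode (rho_of lam k) t - cos_mode (rho_t p k) t)
       + cmod (alpha_t p k) * cmod (f k 1)
         * cmod (cos_mode (rho_of lam k) t - cos_mode (rho_t p k) t + sin_mode (rho_t p k) t * d * of_real t)"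
    unfolding QT_kernel_rem_def d_def by (metis norm_mult norm_triangle_ineq)
  also have "\<dots> \<le> ((2 + \<Omega>) * M * \<xi>) * (E * pi * \<xi>) + 1 * M * (E * pi\<^sup>2 * \<xi>\<^sup>2)"
    using coef norm_alpha_t_le_1[of p k] f[of 1] lip taylor d M0
      in_B_Omega_nonneg[OF B]
    by (intro add_mono mult_mono) (auto simp: \<xi>_def)
  also have "\<dots> = M * E * pi * (2 + \<Omega> + pi) * \<xi>\<^sup>2"
    by (simp add: power2_eq_square algebra_simps)
  finally show ?thesis by (simp add: E_def \<xi>_def)
qed

lemma norm_cos_mode_diff_linearized_le:
  assumes Im: "\<bar>Im r1\<bar> \<le> W" "\<bar>Im r2\<bar> \<le> W" "\<bar>Im r0\<bar> \<le> W" and t: "t \<in> {0..pi}"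
  shows "cmod (cos_mode r1 t - cos_mode r2 t + (r1 - r2) * of_real t * sin_mode r0 t)
    \<le> exp (W * pi) * pi\<^sup>2 * cmod (r1 - r2) * (cmod (r1 - r2) + cmod (r2 - r0))"
proof -
  define E where "E = exp (W * pi)"
  have split: "cos_mode r1 t - cos_mode r2 t + (r1 - r2) * of_real t * sin_mode r0 t
      = (cos_mode r1 t - cos_mode r2 t + sin_mode r2 t * (r1 - r2) * of_real t)
        + (r1 - r2) * of_real t * (sin_mode r0 t - sin_mode r2 t)"
    by (simp add: algebra_simps)
  have taylor: "cmod (cos_mode r1 t - cos_mode r2 t + sin_mode r2 t * (r1 - r2) * of_real t)
      \<le> E * pi\<^sup>2 * (cmod (r1 - r2))\<^sup>2"
    unfolding E_def by (rule norm_cos_mode_taylor1_remainder_le[OF Im(1,2) t])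
  have "cmod (sin_mode r0 t - sin_mode r2 t) \<le> E * pi * cmod (r2 - r0)"
    using norm_sin_mode_diff_le[OF Im(3,2) t] by (simp add: E_def norm_minus_commute)
  then have lip: "cmod ((r1 - r2) * of_real t * (sin_mode r0 t - sin_mode r2 t))
      \<le> cmod (r1 - r2) * pi * (E * pi * cmod (r2 - r0))"
    using t unfolding norm_mult by (intro mult_mono) auto
  have "cmod (cos_mode r1 t - cos_mode r2 t + (r1 - r2) * of_real t * sin_mode r0 t)
      \<le> E * pi\<^sup>2 * (cmod (r1 - r2))\<^sup>2 + cmod (r1 - r2) * pi * (E * pi * cmod (r2 - r0))"
    unfolding split by (rule order_trans[OF norm_triangle_ineq add_mono[OF taylor lip]])
  then show ?thesis by (simp add: E_def power2_eq_square algebra_simps)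
qed

definition QT_kernel_diff_rem :: "nat \<Rightarrow> (nat \<Rightarrow> complex) \<Rightarrow> (nat \<Rightarrow> complex) \<Rightarrow> (nat \<Rightarrow> complex) \<Rightarrow> (nat \<Rightarrow> complex)
    \<Rightarrow> (nat \<Rightarrow> nat \<Rightarrow> complex) \<Rightarrow> nat \<Rightarrow> real \<Rightarrow> complex"
  where "QT_kernel_diff_rem p lam1 al1 lam2 al2 f k t =
    (QT_kernel_coef p lam1 al1 f k - QT_kernel_coef p lam2 al2 f k) * (cos_mode (rho_of lam1 k) t - cos_mode (rho_t p k) t)
    + QT_kernel_coef p lam2 al2 f k * (cos_mode (rho_of lam1 k) t - cos_mode (rho_of lam2 k) t)
    + alpha_t p k * f k 1 * (cos_mode (rho_of lam1 k) t - cos_mode (rho_of lam2 k) t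
        + (rho_of lam1 k - rho_of lam2 k) * of_real t * sin_mode (rho_t p k) t)"

lemma continuous_on_QT_kernel_diff_rem [continuous_intros]:
  "continuous_on S (QT_kernel_diff_rem p lam1 al1 lam2 al2 f k)"
  unfolding QT_kernel_diff_rem_def by (intro continuous_intros)

lemma QT_kernel_diff_eq_mode_expansion:
  "QT_kernel p lam1 al1 f k t - QT_kernel p lam2 al2 f k t
   = (QT_kernel_coef p lam1 al1 f k - QT_kernel_coef p lam2 al2 f k) * cos_mode (rho_t p k) t
     + (- (alpha_t p k * f k 1 * (rho_of lam1 k - rho_of lam2 k))) * of_real t * sin_mode (rho_t p k) t
     + QT_kernel_diff_rem p lam1 al1 lam2 al2 f k t"
  by (simp add: QT_kernel_def QT_kernel_diff_rem_def algebra_simps)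

lemma norm_QT_kernel_diff_rem_le:
  assumes B1: "in_B p \<Omega> lam1 al1" and B2: "in_B p \<Omega> lam2 al2" and k: "k \<ge> 1"
    and f: "\<And>i. i \<le> 1 \<Longrightarrow> cmod (f k i) \<le> M" and t: "t \<in> {0..pi}"
  shows "cmod (QT_kernel_diff_rem p lam1 al1 lam2 al2 f k t)
    \<le> M * exp (\<Omega> * pi) * pi * (2 + \<Omega> + 2 * pi)
        * (data_dist lam1 al1 lam2 al2 k * (xi p lam1 al1 k + xi p lam2 al2 k))"
proof -
  define E where "E = exp (\<Omega> * pi)"
  define \<delta> where "\<delta> = data_dist lam1 al1 lam2 al2 k"
  define \<xi>1 where "\<xi>1 = xi p lam1 al1 k"
  define \<xi>2 where "\<xi>2 = xi p lam2 al2 k"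
  define r where "r = cmod (rho_of lam1 k - rho_of lam2 k)"
  have M0: "M \<ge> 0" using f[of 0] by (meson norm_ge_zero order_trans le0)
  have E0: "E \<ge> 0" by (simp add: E_def)
  have Om: "\<Omega> \<ge> 0" by (rule in_B_Omega_nonneg[OF B1])
  have Im: "\<bar>Im (rho_of lam1 k)\<bar> \<le> \<Omega>" "\<bar>Im (rho_of lam2 k)\<bar> \<le> \<Omega>" "\<bar>Im (rho_t p k)\<bar> \<le> \<Omega>"
    using in_B_abs_Im_rho_le[OF B1 k] in_B_abs_Im_rho_le[OF B2 k] Om by auto
  have r: "0 \<le> r" "r \<le> \<delta>" "r \<le> \<xi>1 + \<xi>2"
    using norm_rho_diff_le_data_dist norm_rho_diff_le_xi_add by (auto simp: r_def \<delta>_def \<xi>1_def \<xi>2_def)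
  have \<xi>: "0 \<le> \<xi>1" "0 \<le> \<xi>2" "cmod (rho_of lam1 k - rho_t p k) \<le> \<xi>1" "cmod (rho_of lam2 k - rho_t p k) \<le> \<xi>2"
    by (simp_all add: \<xi>1_def \<xi>2_def xi_nonneg norm_rho_diff_le_xi)
  have coef_diff: "cmod (QT_kernel_coef p lam1 al1 f k - QT_kernel_coef p lam2 al2 f k) \<le> (2 + \<Omega>) * M * \<delta>"
    unfolding \<delta>_def by (rule norm_QT_kernel_coef_diff_le[OF B1 B2 k]) (rule f)
  have coef2: "cmod (QT_kernel_coef p lam2 al2 f k) \<le> (2 + \<Omega>) * M * \<xi>2"
    unfolding \<xi>2_def by (rule norm_QT_kernel_coef_le[OF B2 k]) (rule f)
  have "E * pi * cmod (rho_of lam1 k - rho_t p k) \<le> E * pi * \<xi>1"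
    using \<xi>(3) E0 by (intro mult_left_mono) auto
  then have lip1: "cmod (cos_mode (rho_of lam1 k) t - cos_mode (rho_t p k) t) \<le> E * pi * \<xi>1"
    using norm_cos_mode_diff_le[OF Im(1,3) t] unfolding E_def by linarith
  have "E * pi * r \<le> E * pi * \<delta>"
    using r(2) E0 by (intro mult_left_mono) auto
  then have lip12: "cmod (cos_mode (rho_of lam1 k) t - cos_mode (rho_of lam2 k) t) \<le> E * pi * \<delta>"
    using norm_cos_mode_diff_le[OF Im(1,2) t] unfolding E_def r_def by linarith
  have lin: "cmod (cos_mode (rho_of lam1 k) t - cos_mode (rho_of lam2 k) t
        + (rho_of lam1 k - rho_of lam2 k) * of_real t * sin_mode (rho_t p k) t)
      \<le> E * pi * (2 * pi * (\<delta> * (\<xi>1 + \<xi>2)))"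
  proof -
    have "r * (r + \<xi>2) \<le> \<delta> * (2 * (\<xi>1 + \<xi>2))"
      using r \<xi> by (intro mult_mono) auto
    then have "E * pi\<^sup>2 * (r * (r + \<xi>2)) \<le> E * pi\<^sup>2 * (\<delta> * (2 * (\<xi>1 + \<xi>2)))"
      using E0 by (intro mult_left_mono) auto
    then have "E * pi\<^sup>2 * r * (r + \<xi>2) \<le> E * pi * (2 * pi * (\<delta> * (\<xi>1 + \<xi>2)))"
      by (simp add: power2_eq_square mult_ac)
    moreover have "E * pi\<^sup>2 * r * (r + cmod (rho_of lam2 k - rho_t p k)) \<le> E * pi\<^sup>2 * r * (r + \<xi>2)"
      using E0 r \<xi> by (intro mult_left_mono add_left_mono) auto
    ultimately show ?thesis
      using norm_cos_mode_diff_linearized_le[OF Im t] unfolding E_def r_def by linarith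
  qed
  have "cmod (QT_kernel_diff_rem p lam1 al1 lam2 al2 f k t)
      \<le> cmod (QT_kernel_coef p lam1 al1 f k - QT_kernel_coef p lam2 al2 f k)
          * cmod (cos_mode (rho_of lam1 k) t - cos_mode (rho_t p k) t)
       + cmod (QT_kernel_coef p lam2 al2 f k) * cmod (cos_mode (rho_of lam1 k) t - cos_mode (rho_of lam2 k) t)
       + cmod (alpha_t p k) * cmod (f k 1) * cmod (cos_mode (rho_of lam1 k) t - cos_mode (rho_of lam2 k) t
            + (rho_of lam1 k - rho_of lam2 k) * of_real t * sin_mode (rho_t p k) t)"
    unfolding QT_kernel_diff_rem_def
    by (rule order_trans[OF norm_add3_le]) (simp add: norm_mult)
  also have "\<dots> \<le> ((2 + \<Omega>) * M * \<delta>) * (E * pi * \<xi>1) + ((2 + \<Omega>) * M * \<xi>2) * (E * pi * \<delta>)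
      + 1 * M * (E * pi * (2 * pi * (\<delta> * (\<xi>1 + \<xi>2))))"
    using coef_diff coef2 lip1 lip12 lin norm_alpha_t_le_1[of p k] f[of 1] M0 Om r \<xi> E0
    by (intro add_mono mult_mono) auto
  also have "\<dots> = M * E * pi * (2 + \<Omega> + 2 * pi) * (\<delta> * (\<xi>1 + \<xi>2))"
    by (simp add: algebra_simps)
  finally show ?thesis by (simp add: E_def \<delta>_def \<xi>1_def \<xi>2_def)
qed

section \<open>L2 bounds for sums of kernels\<close>

lemma bound_nonneg_of_m_bound:
  fixes f :: "nat \<Rightarrow> nat \<Rightarrow> complex"
  assumes "\<And>k i. k \<ge> 1 \<Longrightarrow> i \<le> 1 \<Longrightarrow> cmod (f k i) \<le> M"
  shows "M \<ge> 0"
  using order_trans[OF norm_ge_zero assms[of 1 0]] by simp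

definition QT_kernel_L2_const :: "nat \<Rightarrow> real \<Rightarrow> real" where
  "QT_kernel_L2_const p \<Omega> = 200 * (real p + 1) * ((2 + \<Omega>)\<^sup>2 + 1 + (exp (\<Omega> * pi) * pi * (2 + \<Omega> + pi) * \<Omega>)\<^sup>2)"

definition QT_kernel_diff_L2_const :: "nat \<Rightarrow> real \<Rightarrow> real" where
  "QT_kernel_diff_L2_const p \<Omega> =
    200 * (real p + 1) * ((2 + \<Omega>)\<^sup>2 + 1 + (exp (\<Omega> * pi) * pi * (2 + \<Omega> + 2 * pi))\<^sup>2 * (4 * \<Omega>\<^sup>2))"

lemma integral_QT_kernel_sum_le:
  assumes B: "in_B p \<Omega> lam al" and f: "\<And>k i. k \<ge> 1 \<Longrightarrow> i \<le> 1 \<Longrightarrow> cmod (f k i) \<le> M"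
    and K: "finite K" "\<And>k. k \<in> K \<Longrightarrow> k \<ge> 1"
  shows "integral {0..pi} (\<lambda>t. (cmod (\<Sum>k\<in>K. QT_kernel p lam al f k t))\<^sup>2)
    \<le> QT_kernel_L2_const p \<Omega> * M\<^sup>2 * (\<Sum>k\<in>K. (xi p lam al k)\<^sup>2)"
proof -
  define c where "c = M * exp (\<Omega> * pi) * pi * (2 + \<Omega> + pi)"
  define T where "T = (\<Sum>k\<in>K. (xi p lam al k)\<^sup>2)"
  have M0: "M \<ge> 0" by (rule bound_nonneg_of_m_bound[OF f])
  have U: "cmod (QT_kernel_coef p lam al f k) \<le> (2 + \<Omega>) * M * xi p lam al k" if "k \<in> K" for k
    by (rule norm_QT_kernel_coef_le[OF B]) (use K(2) that f in auto)
  have V: "cmod (- (alpha_t p k * f k 1 * (rho_of lam k - rho_t p k))) \<le> M * xi p lam al k"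
    if "k \<in> K" for k
  proof -
    have "cmod (alpha_t p k) * cmod (f k 1) * cmod (rho_of lam k - rho_t p k) \<le> 1 * M * xi p lam al k"
      using norm_alpha_t_le_1 f[of k 1] K(2)[OF that] norm_rho_diff_le_xi M0 by (intro mult_mono) auto
    then show ?thesis by (simp add: norm_mult)
  qed
  have W: "cmod (QT_kernel_rem p lam al f k t) \<le> c * (xi p lam al k)\<^sup>2" if "k \<in> K" "t \<in> {0..pi}" for k t
    unfolding c_def by (rule norm_QT_kernel_rem_le[OF B]) (use K(2) that f in auto)
  have "integral {0..pi} (\<lambda>t. (cmod (\<Sum>k\<in>K. QT_kernel p lam al f k t))\<^sup>2)
      \<le> 200 * (real p + 1) * ((\<Sum>k\<in>K. ((2 + \<Omega>) * M * xi p lam al k)\<^sup>2)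
          + (\<Sum>k\<in>K. (M * xi p lam al k)\<^sup>2) + (\<Sum>k\<in>K. c * (xi p lam al k)\<^sup>2)\<^sup>2)"
    unfolding QT_kernel_eq_mode_expansion
    by (rule integral_mode_expansion_le[OF K(1) U V W]) (auto intro!: continuous_intros)
  also have "\<dots> = 200 * (real p + 1) * ((2 + \<Omega>)\<^sup>2 * M\<^sup>2 * T + M\<^sup>2 * T + c\<^sup>2 * T * T)"
    by (simp add: T_def power_mult_distrib sum_distrib_left power2_eq_square mult_ac)
  also have "\<dots> \<le> 200 * (real p + 1) * ((2 + \<Omega>)\<^sup>2 * M\<^sup>2 * T + M\<^sup>2 * T + c\<^sup>2 * \<Omega>\<^sup>2 * T)"
  proof -
    have "T \<le> \<Omega>\<^sup>2"
      unfolding T_def by (rule in_B_sum_xi_le[OF B K])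
    then have "c\<^sup>2 * T * T \<le> c\<^sup>2 * \<Omega>\<^sup>2 * T"
      by (intro mult_mono mult_left_mono) (auto simp: T_def sum_nonneg)
    then show ?thesis by (intro mult_left_mono add_left_mono) auto
  qed
  also have "\<dots> = QT_kernel_L2_const p \<Omega> * M\<^sup>2 * T"
    by (simp add: QT_kernel_L2_const_def c_def power2_eq_square algebra_simps)
  finally show ?thesis unfolding T_def .
qed

lemma in_B_sum_mult_xi_add_square_le:
  assumes B1: "in_B p \<Omega> lam1 al1" and B2: "in_B p \<Omega> lam2 al2"
    and K: "finite K" "\<And>k. k \<in> K \<Longrightarrow> k \<ge> 1"
  shows "(\<Sum>k\<in>K. d k * (xi p lam1 al1 k + xi p lam2 al2 k))\<^sup>2 \<le> 4 * \<Omega>\<^sup>2 * (\<Sum>k\<in>K. (d k)\<^sup>2)"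
proof -
  have "(\<Sum>k\<in>K. (xi p lam1 al1 k + xi p lam2 al2 k)\<^sup>2)
      \<le> (\<Sum>k\<in>K. 2 * (xi p lam1 al1 k)\<^sup>2 + 2 * (xi p lam2 al2 k)\<^sup>2)"
    by (intro sum_mono square_add_le_2)
  also have "\<dots> \<le> 4 * \<Omega>\<^sup>2"
    using in_B_sum_xi_le[OF B1 K] in_B_sum_xi_le[OF B2 K]
    by (simp add: sum.distrib sum_distrib_left[symmetric])
  finally show ?thesis
    using Cauchy_Schwarz_ineq_sum[of d "\<lambda>k. xi p lam1 al1 k + xi p lam2 al2 k" K]
      mult_left_mono[of _ "4 * \<Omega>\<^sup>2" "\<Sum>k\<in>K. (d k)\<^sup>2"]
    by (fastforce simp: sum_nonneg mult.commute)
qed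

lemma integral_QT_kernel_sum_diff_le:
  assumes B1: "in_B p \<Omega> lam1 al1" and B2: "in_B p \<Omega> lam2 al2"
    and f: "\<And>k i. k \<ge> 1 \<Longrightarrow> i \<le> 1 \<Longrightarrow> cmod (f k i) \<le> M"
    and K: "finite K" "\<And>k. k \<in> K \<Longrightarrow> k \<ge> 1"
  shows "integral {0..pi} (\<lambda>t. (cmod ((\<Sum>k\<in>K. QT_kernel p lam1 al1 f k t) - (\<Sum>k\<in>K. QT_kernel p lam2 al2 f k t)))\<^sup>2)
    \<le> QT_kernel_diff_L2_const p \<Omega> * M\<^sup>2 * (\<Sum>k\<in>K. (data_dist lam1 al1 lam2 al2 k)\<^sup>2)"
proof -
  define c where "c = M * exp (\<Omega> * pi) * pi * (2 + \<Omega> + 2 * pi)"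
  define \<delta> where "\<delta> = data_dist lam1 al1 lam2 al2"
  define \<eta> where "\<eta> k = xi p lam1 al1 k + xi p lam2 al2 k" for k
  define S where "S = (\<Sum>k\<in>K. (\<delta> k)\<^sup>2)"
  define X where "X = (\<Sum>k\<in>K. \<delta> k * \<eta> k)"
  have M0: "M \<ge> 0" by (rule bound_nonneg_of_m_bound[OF f])
  have U: "cmod (QT_kernel_coef p lam1 al1 f k - QT_kernel_coef p lam2 al2 f k) \<le> (2 + \<Omega>) * M * \<delta> k"
    if "k \<in> K" for k
    unfolding \<delta>_def by (rule norm_QT_kernel_coef_diff_le[OF B1 B2]) (use K(2) that f in auto)
  have V: "cmod (- (alpha_t p k * f k 1 * (rho_of lam1 k - rho_of lam2 k))) \<le> M * \<delta> k"
    if "k \<in> K" for k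
  proof -
    have "cmod (alpha_t p k) * cmod (f k 1) * cmod (rho_of lam1 k - rho_of lam2 k) \<le> 1 * M * \<delta> k"
      using norm_alpha_t_le_1 f[of k 1] K(2)[OF that] norm_rho_diff_le_data_dist M0
      by (intro mult_mono) (auto simp: \<delta>_def)
    then show ?thesis by (simp add: norm_mult)
  qed
  have W: "cmod (QT_kernel_diff_rem p lam1 al1 lam2 al2 f k t) \<le> c * (\<delta> k * \<eta> k)"
    if "k \<in> K" "t \<in> {0..pi}" for k t
    unfolding c_def \<delta>_def \<eta>_def by (rule norm_QT_kernel_diff_rem_le[OF B1 B2]) (use K(2) that f in auto)
  have eq: "(\<Sum>k\<in>K. QT_kernel p lam1 al1 f k t) - (\<Sum>k\<in>K. QT_kernel p lam2 al2 f k t)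
      = (\<Sum>k\<in>K. (QT_kernel_coef p lam1 al1 f k - QT_kernel_coef p lam2 al2 f k) * cos_mode (rho_t p k) t
          + (- (alpha_t p k * f k 1 * (rho_of lam1 k - rho_of lam2 k))) * of_real t * sin_mode (rho_t p k) t
          + QT_kernel_diff_rem p lam1 al1 lam2 al2 f k t)" for t
    by (simp add: sum_subtractf[symmetric] QT_kernel_diff_eq_mode_expansion)
  have "integral {0..pi} (\<lambda>t. (cmod ((\<Sum>k\<in>K. QT_kernel p lam1 al1 f k t) - (\<Sum>k\<in>K. QT_kernel p lam2 al2 f k t)))\<^sup>2)
      \<le> 200 * (real p + 1) * ((\<Sum>k\<in>K. ((2 + \<Omega>) * M * \<delta> k)\<^sup>2) + (\<Sum>k\<in>K. (M * \<delta> k)\<^sup>2)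
          + (\<Sum>k\<in>K. c * (\<delta> k * \<eta> k))\<^sup>2)"
    unfolding eq by (rule integral_mode_expansion_le[OF K(1) U V W]) (auto intro!: continuous_intros)
  also have "\<dots> = 200 * (real p + 1) * ((2 + \<Omega>)\<^sup>2 * M\<^sup>2 * S + M\<^sup>2 * S + c\<^sup>2 * X\<^sup>2)"
    by (simp add: S_def X_def power_mult_distrib sum_distrib_left[symmetric])
  also have "\<dots> \<le> 200 * (real p + 1) * ((2 + \<Omega>)\<^sup>2 * M\<^sup>2 * S + M\<^sup>2 * S + c\<^sup>2 * (4 * \<Omega>\<^sup>2 * S))"
  proof -
    have "X\<^sup>2 \<le> 4 * \<Omega>\<^sup>2 * S"
      unfolding X_def S_def \<eta>_def by (rule in_B_sum_mult_xi_add_square_le[OF B1 B2 K])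
    then show ?thesis by (intro mult_left_mono add_left_mono) auto
  qed
  also have "\<dots> = QT_kernel_diff_L2_const p \<Omega> * M\<^sup>2 * S"
    by (simp add: QT_kernel_diff_L2_const_def c_def power2_eq_square algebra_simps)
  finally show ?thesis unfolding S_def \<delta>_def .
qed

section \<open>The rows of the operator\<close>

lemma summable_of_block_square_bound:
  fixes a :: "nat \<Rightarrow> 'a::banach" and b :: "nat \<Rightarrow> real"
  assumes b: "summable b" "\<And>k. b k \<ge> 0"
    and bound: "\<And>m n. (norm (\<Sum>k\<in>{m..<n}. a k))\<^sup>2 \<le> C * (\<Sum>k\<in>{m..<n}. b k)"
  shows "summable a"
  unfolding summable_Cauchy
proof (intro allI impI)
  fix e :: real assume e: "e > 0"
  define C' where "C' = max C 1"
  have C': "C' > 0" "C \<le> C'" by (auto simp: C'_def)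
  obtain N where N: "\<And>m n. m \<ge> N \<Longrightarrow> norm (\<Sum>k\<in>{m..<n}. b k) < e\<^sup>2 / C'"
    using b(1) e C' unfolding summable_Cauchy by (meson divide_pos_pos zero_less_power)
  show "\<exists>N. \<forall>m\<ge>N. \<forall>n. norm (\<Sum>k\<in>{m..<n}. a k) < e"
  proof (intro exI allI impI)
    fix m n assume "m \<ge> N"
    have s0: "(\<Sum>k\<in>{m..<n}. b k) \<ge> 0" using b(2) by (simp add: sum_nonneg)
    then have "(\<Sum>k\<in>{m..<n}. b k) < e\<^sup>2 / C'" using N[OF \<open>m \<ge> N\<close>, of n] by simp
    then have "C' * (\<Sum>k\<in>{m..<n}. b k) < e\<^sup>2" using C' by (simp add: field_simps)
    moreover have "C * (\<Sum>k\<in>{m..<n}. b k) \<le> C' * (\<Sum>k\<in>{m..<n}. b k)"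
      using C' s0 by (intro mult_right_mono) auto
    ultimately have "(norm (\<Sum>k\<in>{m..<n}. a k))\<^sup>2 < e\<^sup>2" using bound[of m n] by linarith
    then show "norm (\<Sum>k\<in>{m..<n}. a k) < e" using e by (simp add: power_less_imp_less_base)
  qed
qed

lemma summable_QT_term:
  assumes B: "in_B p \<Omega> lam al" and f: "\<And>k i. k \<ge> 1 \<Longrightarrow> i \<le> 1 \<Longrightarrow> cmod (f k i) \<le> M"
    and x: "0 \<le> x" "x \<le> pi"
  shows "summable (\<lambda>k. QT_term p lam al x f n i (Suc k))"
proof (rule summable_of_block_square_bound[OF in_B_summable_xi[OF B] zero_le_power2])
  fix m m' :: nat
  define c where "c = cos_mode (rhoI p lam n i)"
  define H where "H t = (\<Sum>k\<in>{Suc m..<Suc m'}. QT_kernel p lam al f k t)" for t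
  have "(\<Sum>k\<in>{m..<m'}. QT_term p lam al x f n i (Suc k)) = integral {0..x} (\<lambda>t. c t * H t)"
    unfolding sum.shift_bounds_Suc_ivl[symmetric] c_def H_def by (rule sum_QT_term_eq_integral) simp
  moreover have "(cmod (integral {0..x} (\<lambda>t. c t * H t)))\<^sup>2
      \<le> integral {0..x} (\<lambda>t. (cmod (c t))\<^sup>2) * integral {0..pi} (\<lambda>t. (cmod (H t))\<^sup>2)"
    using x unfolding c_def H_def
    by (intro order_trans[OF norm_integral_mult_square_le] mult_left_mono integral_cmod_square_mono
        integral_cmod_square_nonneg continuous_intros) auto
  moreover have "integral {0..pi} (\<lambda>t. (cmod (H t))\<^sup>2)
      \<le> QT_kernel_L2_const p \<Omega> * M\<^sup>2 * (\<Sum>k\<in>{m..<m'}. (xi p lam al (Suc k))\<^sup>2)"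
  proof -
    have "integral {0..pi} (\<lambda>t. (cmod (\<Sum>k\<in>{Suc m..<Suc m'}. QT_kernel p lam al f k t))\<^sup>2)
        \<le> QT_kernel_L2_const p \<Omega> * M\<^sup>2 * (\<Sum>k\<in>{Suc m..<Suc m'}. (xi p lam al k)\<^sup>2)"
      by (rule integral_QT_kernel_sum_le[OF B]) (use f in auto)
    then show ?thesis unfolding H_def by (simp only: sum.shift_bounds_Suc_ivl)
  qed
  ultimately show "(norm (\<Sum>k\<in>{m..<m'}. QT_term p lam al x f n i (Suc k)))\<^sup>2
      \<le> integral {0..x} (\<lambda>t. (cmod (c t))\<^sup>2) * (QT_kernel_L2_const p \<Omega> * M\<^sup>2)
        * (\<Sum>k\<in>{m..<m'}. (xi p lam al (Suc k))\<^sup>2)"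
    using integral_cmod_square_nonneg[of 0 x c] unfolding c_def
    by (auto simp: mult.assoc intro: order_trans[OF _ mult_left_mono] continuous_intros)
qed

lemma sum_image_Suc: "(\<Sum>k\<in>Suc ` A. F k) = (\<Sum>j\<in>A. F (Suc j))"
  by (simp add: sum.reindex)

lemma sum_norm_integral_cos_mode_rho_t_le:
  assumes gc: "continuous_on {0..pi} g" and x: "0 \<le> x" "x \<le> pi"
  shows "(\<Sum>n<N. (cmod (integral {0..x} (\<lambda>t. cos_mode (rho_t p (Suc n)) t * g t)))\<^sup>2)
    \<le> 200 * (real p + 1) * integral {0..pi} (\<lambda>t. (cmod (g t))\<^sup>2)"
proof -
  have "(\<Sum>n<N. (cmod (integral {0..x} (\<lambda>t. cos_mode (rho_t p (Suc n)) t * g t)))\<^sup>2)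
      \<le> 200 * (real p + 1) * integral {0..x} (\<lambda>t. (cmod (g t))\<^sup>2)"
    using bessel_cos_mode_rho_t[OF _ gc x, of "Suc ` {..<N}"] by (simp add: sum_image_Suc)
  also have "\<dots> \<le> 200 * (real p + 1) * integral {0..pi} (\<lambda>t. (cmod (g t))\<^sup>2)"
    by (intro mult_left_mono integral_cmod_square_mono[OF gc x]) auto
  finally show ?thesis .
qed

lemma sum_norm_integral_mult_le:
  fixes \<phi> :: "nat \<Rightarrow> real \<Rightarrow> complex"
  assumes gc: "continuous_on {0..pi} g" and x: "0 \<le> x" "x \<le> pi"
    and \<phi>c: "\<And>n. n \<in> N \<Longrightarrow> continuous_on {0..x} (\<phi> n)"
    and \<phi>b: "\<And>n t. n \<in> N \<Longrightarrow> t \<in> {0..x} \<Longrightarrow> cmod (\<phi> n t) \<le> c n"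
  shows "(\<Sum>n\<in>N. (cmod (integral {0..x} (\<lambda>t. \<phi> n t * g t)))\<^sup>2)
    \<le> pi * (\<Sum>n\<in>N. (c n)\<^sup>2) * integral {0..pi} (\<lambda>t. (cmod (g t))\<^sup>2)"
proof -
  have "(\<Sum>n\<in>N. (cmod (integral {0..x} (\<lambda>t. \<phi> n t * g t)))\<^sup>2)
      \<le> (\<Sum>n\<in>N. pi * (c n)\<^sup>2 * integral {0..pi} (\<lambda>t. (cmod (g t))\<^sup>2))"
    by (intro sum_mono norm_integral_mult_square_le_bound[OF \<phi>c gc x \<phi>b])
  then show ?thesis by (simp add: sum_distrib_left sum_distrib_right mult_ac)
qed

lemma sum_norm_integral_cos_mode_diff_le:
  fixes r1 r2 :: "nat \<Rightarrow> complex"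
  assumes gc: "continuous_on {0..pi} g" and x: "0 \<le> x" "x \<le> pi"
    and Im: "\<And>n. \<bar>Im (r1 n)\<bar> \<le> W" "\<And>n. \<bar>Im (r2 n)\<bar> \<le> W"
  shows "(\<Sum>n\<in>N. (cmod (integral {0..x} (\<lambda>t. (cos_mode (r1 n) t - cos_mode (r2 n) t) * g t)))\<^sup>2)
    \<le> pi ^ 3 * (exp (W * pi))\<^sup>2 * (\<Sum>n\<in>N. (cmod (r1 n - r2 n))\<^sup>2) * integral {0..pi} (\<lambda>t. (cmod (g t))\<^sup>2)"
proof -
  have "(\<Sum>n\<in>N. (cmod (integral {0..x} (\<lambda>t. (cos_mode (r1 n) t - cos_mode (r2 n) t) * g t)))\<^sup>2)
      \<le> pi * (\<Sum>n\<in>N. (exp (W * pi) * pi * cmod (r1 n - r2 n))\<^sup>2) * integral {0..pi} (\<lambda>t. (cmod (g t))\<^sup>2)"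
  proof (rule sum_norm_integral_mult_le[OF gc x])
    fix n t assume "t \<in> {0..x}"
    then show "cmod (cos_mode (r1 n) t - cos_mode (r2 n) t) \<le> exp (W * pi) * pi * cmod (r1 n - r2 n)"
      using x by (intro norm_cos_mode_diff_le Im) auto
  qed (intro continuous_intros)
  then show ?thesis
    by (simp add: power_mult_distrib sum_distrib_left[symmetric] power2_eq_square power3_eq_cube mult_ac)
qed

lemma integral_mult_diff_split:
  fixes c0 c1 c2 H1 H2 :: "real \<Rightarrow> complex"
  assumes "continuous_on {a..b} c0" "continuous_on {a..b} c1" "continuous_on {a..b} c2"
    "continuous_on {a..b} H1" "continuous_on {a..b} H2"
  shows "integral {a..b} (\<lambda>t. c1 t * H1 t) - integral {a..b} (\<lambda>t. c2 t * H2 t)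
    = integral {a..b} (\<lambda>t. c0 t * (H1 t - H2 t)) + integral {a..b} (\<lambda>t. (c1 t - c0 t) * (H1 t - H2 t))
      + integral {a..b} (\<lambda>t. (c1 t - c2 t) * H2 t)"
proof -
  have int: "(\<lambda>t. u t * v t) integrable_on {a..b}"
    if "continuous_on {a..b} u" "continuous_on {a..b} v" for u v :: "real \<Rightarrow> complex"
    by (intro integrable_continuous_interval continuous_intros that)
  have "integral {a..b} (\<lambda>t. c1 t * H1 t) - integral {a..b} (\<lambda>t. c2 t * H2 t)
      = integral {a..b} (\<lambda>t. c0 t * (H1 t - H2 t) + (c1 t - c0 t) * (H1 t - H2 t) + (c1 t - c2 t) * H2 t)"
    by (subst integral_diff[symmetric]) (auto intro!: int integral_cong assms simp: algebra_simps)
  also have "\<dots> = integral {a..b} (\<lambda>t. c0 t * (H1 t - H2 t)) + integral {a..b} (\<lambda>t. (c1 t - c0 t) * (H1 t - H2 t))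
      + integral {a..b} (\<lambda>t. (c1 t - c2 t) * H2 t)"
    by (subst integral_add; (subst integral_add)?) (auto intro!: int integrable_add continuous_intros assms)
  finally show ?thesis .
qed

lemma sum_QT_term_diff_eq_integrals:
  fixes p :: nat and lam1 al1 lam2 al2 :: "nat \<Rightarrow> complex" and f :: "nat \<Rightarrow> nat \<Rightarrow> complex"
  assumes K: "finite K"
  defines "H1 \<equiv> \<lambda>t. \<Sum>k\<in>K. QT_kernel p lam1 al1 f k t" and "H2 \<equiv> \<lambda>t. \<Sum>k\<in>K. QT_kernel p lam2 al2 f k t"
  shows "(\<Sum>k\<in>K. QT_term p lam1 al1 x f n 1 k - QT_term p lam2 al2 x f n 1 k)
      = integral {0..x} (\<lambda>t. cos_mode (rho_t p n) t * (H1 t - H2 t))"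
    and "(\<Sum>k\<in>K. QT_term p lam1 al1 x f n 0 k - QT_term p lam2 al2 x f n 0 k)
      = integral {0..x} (\<lambda>t. cos_mode (rho_t p n) t * (H1 t - H2 t))
        + integral {0..x} (\<lambda>t. (cos_mode (rho_of lam1 n) t - cos_mode (rho_t p n) t) * (H1 t - H2 t))
        + integral {0..x} (\<lambda>t. (cos_mode (rho_of lam1 n) t - cos_mode (rho_of lam2 n) t) * H2 t)"
proof -
  have H: "continuous_on {0..x} H1" "continuous_on {0..x} H2"
    unfolding H1_def H2_def by (intro continuous_intros)+
  have eq: "(\<Sum>k\<in>K. QT_term p lam1 al1 x f n i k - QT_term p lam2 al2 x f n i k)
      = integral {0..x} (\<lambda>t. cos_mode (rhoI p lam1 n i) t * H1 t)
        - integral {0..x} (\<lambda>t. cos_mode (rhoI p lam2 n i) t * H2 t)" for i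
    unfolding sum_subtractf H1_def H2_def sum_QT_term_eq_integral[OF K] ..
  show "(\<Sum>k\<in>K. QT_term p lam1 al1 x f n 1 k - QT_term p lam2 al2 x f n 1 k)
      = integral {0..x} (\<lambda>t. cos_mode (rho_t p n) t * (H1 t - H2 t))"
    unfolding eq using integral_mult_diff_split[of 0 x "cos_mode (rho_t p n)", OF _ _ _ H] 
    by (simp add: rhoI_def continuous_intros)
  show "(\<Sum>k\<in>K. QT_term p lam1 al1 x f n 0 k - QT_term p lam2 al2 x f n 0 k)
      = integral {0..x} (\<lambda>t. cos_mode (rho_t p n) t * (H1 t - H2 t))
        + integral {0..x} (\<lambda>t. (cos_mode (rho_of lam1 n) t - cos_mode (rho_t p n) t) * (H1 t - H2 t))
        + integral {0..x} (\<lambda>t. (cos_mode (rho_of lam1 n) t - cos_mode (rho_of lam2 n) t) * H2 t)"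
    unfolding eq by (simp add: rhoI_def integral_mult_diff_split[OF _ _ _ H] continuous_intros)
qed

lemma sum_norm_add3_square_le:
  fixes a b c :: "nat \<Rightarrow> complex"
  shows "(\<Sum>n\<in>N. (cmod (a n + b n + c n))\<^sup>2 + (cmod (a n))\<^sup>2)
    \<le> 4 * (\<Sum>n\<in>N. (cmod (a n))\<^sup>2) + 3 * (\<Sum>n\<in>N. (cmod (b n))\<^sup>2) + 3 * (\<Sum>n\<in>N. (cmod (c n))\<^sup>2)"
proof -
  have "(cmod (a n + b n + c n))\<^sup>2 \<le> 3 * ((cmod (a n))\<^sup>2 + (cmod (b n))\<^sup>2 + (cmod (c n))\<^sup>2)" for n
  proof -
    have "(cmod (a n + b n + c n))\<^sup>2 \<le> (cmod (a n) + cmod (b n) + cmod (c n))\<^sup>2"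
      by (rule power_mono[OF norm_add3_le norm_ge_zero])
    also have "\<dots> \<le> 3 * ((cmod (a n))\<^sup>2 + (cmod (b n))\<^sup>2 + (cmod (c n))\<^sup>2)"
      by (rule square_sum3_le)
    finally show ?thesis .
  qed
  then have "(\<Sum>n\<in>N. (cmod (a n + b n + c n))\<^sup>2 + (cmod (a n))\<^sup>2)
      \<le> (\<Sum>n\<in>N. 4 * (cmod (a n))\<^sup>2 + 3 * (cmod (b n))\<^sup>2 + 3 * (cmod (c n))\<^sup>2)"
    by (intro sum_mono) (simp add: algebra_simps)
  then show ?thesis by (simp add: sum.distrib sum_distrib_left)
qed

lemma partial_rows_QT_diff_le_integrals:
  fixes p :: nat and lam1 al1 lam2 al2 :: "nat \<Rightarrow> complex" and f :: "nat \<Rightarrow> nat \<Rightarrow> complex" and m :: nat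
  assumes B1: "in_B p \<Omega> lam1 al1" and B2: "in_B p \<Omega> lam2 al2" and x: "0 \<le> x" "x \<le> pi"
  defines "H1 \<equiv> \<lambda>t. \<Sum>k\<in>Suc ` {..<m}. QT_kernel p lam1 al1 f k t"
    and "H2 \<equiv> \<lambda>t. \<Sum>k\<in>Suc ` {..<m}. QT_kernel p lam2 al2 f k t"
  shows "(\<Sum>n<N. (cmod (\<Sum>k<m. QT_term p lam1 al1 x f (Suc n) 0 (Suc k) - QT_term p lam2 al2 x f (Suc n) 0 (Suc k)))\<^sup>2
              + (cmod (\<Sum>k<m. QT_term p lam1 al1 x f (Suc n) 1 (Suc k) - QT_term p lam2 al2 x f (Suc n) 1 (Suc k)))\<^sup>2)
    \<le> (800 * (real p + 1) + 3 * pi ^ 3 * (exp (\<Omega> * pi))\<^sup>2 * \<Omega>\<^sup>2) * integral {0..pi} (\<lambda>t. (cmod (H1 t - H2 t))\<^sup>2)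
      + 3 * pi ^ 3 * (exp (\<Omega> * pi))\<^sup>2 * (\<Sum>n. (data_dist lam1 al1 lam2 al2 (Suc n))\<^sup>2)
        * integral {0..pi} (\<lambda>t. (cmod (H2 t))\<^sup>2)"
proof -
  define E where "E = exp (\<Omega> * pi)"
  define \<delta> where "\<delta> = data_dist lam1 al1 lam2 al2"
  define G where "G t = H1 t - H2 t" for t
  define IG where "IG = integral {0..pi} (\<lambda>t. (cmod (G t))\<^sup>2)"
  define IH where "IH = integral {0..pi} (\<lambda>t. (cmod (H2 t))\<^sup>2)"
  define a where "a n = integral {0..x} (\<lambda>t. cos_mode (rho_t p (Suc n)) t * G t)" for n
  define b where "b n = integral {0..x} (\<lambda>t. (cos_mode (rho_of lam1 (Suc n)) t - cos_mode (rho_t p (Suc n)) t) * G t)" for n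
  define c where "c n = integral {0..x} (\<lambda>t. (cos_mode (rho_of lam1 (Suc n)) t - cos_mode (rho_of lam2 (Suc n)) t) * H2 t)" for n
  have Hc: "continuous_on {0..pi} H2" "continuous_on {0..pi} G"
    unfolding G_def H1_def H2_def by (intro continuous_intros)+
  have IG0: "IG \<ge> 0" and IH0: "IH \<ge> 0"
    unfolding IG_def IH_def by (intro integral_cmod_square_nonneg Hc)+
  have Im: "\<bar>Im (rho_of lam1 (Suc n))\<bar> \<le> \<Omega>" "\<bar>Im (rho_of lam2 (Suc n))\<bar> \<le> \<Omega>"
    "\<bar>Im (rho_t p (Suc n))\<bar> \<le> \<Omega>" for n
    using in_B_abs_Im_rho_le[OF B1] in_B_abs_Im_rho_le[OF B2] in_B_Omega_nonneg[OF B1] by auto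
  have Sa: "(\<Sum>n<N. (cmod (a n))\<^sup>2) \<le> 200 * (real p + 1) * IG"
    unfolding a_def IG_def by (rule sum_norm_integral_cos_mode_rho_t_le[OF Hc(2) x])
  have "(\<Sum>n<N. (cmod (b n))\<^sup>2) \<le> pi ^ 3 * E\<^sup>2 * (\<Sum>n<N. (cmod (rho_of lam1 (Suc n) - rho_t p (Suc n)))\<^sup>2) * IG"
    unfolding b_def IG_def E_def by (rule sum_norm_integral_cos_mode_diff_le[OF Hc(2) x Im(1) Im(3)])
  also have "\<dots> \<le> pi ^ 3 * E\<^sup>2 * \<Omega>\<^sup>2 * IG"
  proof -
    have "(\<Sum>n<N. (cmod (rho_of lam1 (Suc n) - rho_t p (Suc n)))\<^sup>2) \<le> (\<Sum>n<N. (xi p lam1 al1 (Suc n))\<^sup>2)"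
      by (intro sum_mono power_mono norm_rho_diff_le_xi) simp
    also have "\<dots> = (\<Sum>k\<in>Suc ` {..<N}. (xi p lam1 al1 k)\<^sup>2)"
      by (simp add: sum_image_Suc)
    also have "\<dots> \<le> \<Omega>\<^sup>2"
      by (rule in_B_sum_xi_le[OF B1]) auto
    finally show ?thesis using IG0 by (intro mult_right_mono mult_left_mono) auto
  qed
  finally have Sb: "(\<Sum>n<N. (cmod (b n))\<^sup>2) \<le> pi ^ 3 * E\<^sup>2 * \<Omega>\<^sup>2 * IG" .
  have "(\<Sum>n<N. (cmod (c n))\<^sup>2) \<le> pi ^ 3 * E\<^sup>2 * (\<Sum>n<N. (cmod (rho_of lam1 (Suc n) - rho_of lam2 (Suc n)))\<^sup>2) * IH"
    unfolding c_def IH_def E_def by (rule sum_norm_integral_cos_mode_diff_le[OF Hc(1) x Im(1) Im(2)])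
  also have "\<dots> \<le> pi ^ 3 * E\<^sup>2 * (\<Sum>n. (\<delta> (Suc n))\<^sup>2) * IH"
  proof -
    have "(\<Sum>n<N. (cmod (rho_of lam1 (Suc n) - rho_of lam2 (Suc n)))\<^sup>2) \<le> (\<Sum>n<N. (\<delta> (Suc n))\<^sup>2)"
      unfolding \<delta>_def by (intro sum_mono power_mono norm_rho_diff_le_data_dist) auto
    also have "\<dots> \<le> (\<Sum>n. (\<delta> (Suc n))\<^sup>2)"
      unfolding \<delta>_def by (intro sum_le_suminf in_B_summable_data_dist[OF B1 B2]) auto
    finally show ?thesis using IH0 by (intro mult_right_mono mult_left_mono) auto
  qed
  finally have Sc: "(\<Sum>n<N. (cmod (c n))\<^sup>2) \<le> pi ^ 3 * E\<^sup>2 * (\<Sum>n. (\<delta> (Suc n))\<^sup>2) * IH" .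
  have rows: "(\<Sum>k<m. QT_term p lam1 al1 x f (Suc n) 1 (Suc k) - QT_term p lam2 al2 x f (Suc n) 1 (Suc k)) = a n"
    "(\<Sum>k<m. QT_term p lam1 al1 x f (Suc n) 0 (Suc k) - QT_term p lam2 al2 x f (Suc n) 0 (Suc k)) = a n + b n + c n"
    for n
    using sum_QT_term_diff_eq_integrals[of "Suc ` {..<m}" p lam1 al1 x f "Suc n" lam2 al2]
    by (simp_all add: sum_image_Suc a_def b_def c_def G_def H1_def H2_def)
  show ?thesis
    using sum_norm_add3_square_le[of a b c "{..<N}"] Sa Sb Sc
    unfolding rows E_def[symmetric] \<delta>_def[symmetric] G_def[symmetric] IG_def[symmetric] IH_def[symmetric]
    by (simp add: algebra_simps)
qed

definition row_const :: "nat \<Rightarrow> real \<Rightarrow> real" where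
  "row_const p \<Omega> = (800 * (real p + 1) + 3 * pi ^ 3 * (exp (\<Omega> * pi))\<^sup>2 * \<Omega>\<^sup>2) * QT_kernel_diff_L2_const p \<Omega>
     + 3 * pi ^ 3 * (exp (\<Omega> * pi))\<^sup>2 * \<Omega>\<^sup>2 * QT_kernel_L2_const p \<Omega> + 1"

lemma row_const_pos: "row_const p \<Omega> > 0"
  unfolding row_const_def QT_kernel_diff_L2_const_def QT_kernel_L2_const_def
  by (intro add_nonneg_pos add_nonneg_nonneg mult_nonneg_nonneg) auto

lemma partial_rows_QT_diff_le:
  assumes B1: "in_B p \<Omega> lam1 al1" and B2: "in_B p \<Omega> lam2 al2"
    and f: "\<And>k i. k \<ge> 1 \<Longrightarrow> i \<le> 1 \<Longrightarrow> cmod (f k i) \<le> M" and x: "0 \<le> x" "x \<le> pi"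
  shows "(\<Sum>n<N. (cmod (\<Sum>k<m. QT_term p lam1 al1 x f (Suc n) 0 (Suc k) - QT_term p lam2 al2 x f (Suc n) 0 (Suc k)))\<^sup>2
              + (cmod (\<Sum>k<m. QT_term p lam1 al1 x f (Suc n) 1 (Suc k) - QT_term p lam2 al2 x f (Suc n) 1 (Suc k)))\<^sup>2)
    \<le> row_const p \<Omega> * M\<^sup>2 * (\<Sum>n. (data_dist lam1 al1 lam2 al2 (Suc n))\<^sup>2)" (is "?rows \<le> _")
proof -
  define K where "K = Suc ` {..<m}"
  define Z where "Z = (\<Sum>n. (data_dist lam1 al1 lam2 al2 (Suc n))\<^sup>2)"
  define c where "c = 3 * pi ^ 3 * (exp (\<Omega> * pi))\<^sup>2"
  define IG where "IG = integral {0..pi} (\<lambda>t. (cmod ((\<Sum>k\<in>K. QT_kernel p lam1 al1 f k t)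
      - (\<Sum>k\<in>K. QT_kernel p lam2 al2 f k t)))\<^sup>2)"
  define IH where "IH = integral {0..pi} (\<lambda>t. (cmod (\<Sum>k\<in>K. QT_kernel p lam2 al2 f k t))\<^sup>2)"
  have K: "finite K" "\<And>k. k \<in> K \<Longrightarrow> k \<ge> 1" by (auto simp: K_def)
  have Zs: "summable (\<lambda>n. (data_dist lam1 al1 lam2 al2 (Suc n))\<^sup>2)"
    by (rule in_B_summable_data_dist[OF B1 B2])
  have Z0: "Z \<ge> 0" unfolding Z_def by (rule suminf_nonneg[OF Zs]) simp
  have "integral {0..pi} (\<lambda>t. (cmod ((\<Sum>k\<in>K. QT_kernel p lam1 al1 f k t) - (\<Sum>k\<in>K. QT_kernel p lam2 al2 f k t)))\<^sup>2)
      \<le> QT_kernel_diff_L2_const p \<Omega> * M\<^sup>2 * (\<Sum>k\<in>K. (data_dist lam1 al1 lam2 al2 k)\<^sup>2)"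
    by (rule integral_QT_kernel_sum_diff_le[OF B1 B2 _ K]) (rule f)
  also have "\<dots> \<le> QT_kernel_diff_L2_const p \<Omega> * M\<^sup>2 * Z"
    unfolding K_def sum_image_Suc Z_def
    by (intro mult_left_mono sum_le_suminf[OF Zs]) (auto simp: QT_kernel_diff_L2_const_def)
  finally have IG: "IG \<le> QT_kernel_diff_L2_const p \<Omega> * M\<^sup>2 * Z" unfolding IG_def .
  have "integral {0..pi} (\<lambda>t. (cmod (\<Sum>k\<in>K. QT_kernel p lam2 al2 f k t))\<^sup>2)
      \<le> QT_kernel_L2_const p \<Omega> * M\<^sup>2 * (\<Sum>k\<in>K. (xi p lam2 al2 k)\<^sup>2)"
    by (rule integral_QT_kernel_sum_le[OF B2 _ K]) (rule f)
  also have "\<dots> \<le> QT_kernel_L2_const p \<Omega> * M\<^sup>2 * \<Omega>\<^sup>2"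
    by (intro mult_left_mono in_B_sum_xi_le[OF B2 K]) (auto simp: QT_kernel_L2_const_def)
  finally have IH: "IH \<le> QT_kernel_L2_const p \<Omega> * M\<^sup>2 * \<Omega>\<^sup>2" unfolding IH_def .
  have A0: "0 \<le> 800 * (real p + 1) + c * \<Omega>\<^sup>2" and cZ0: "0 \<le> c * Z"
    using Z0 by (auto simp: c_def)
  have "?rows \<le> (800 * (real p + 1) + c * \<Omega>\<^sup>2) * IG + c * Z * IH"
    using partial_rows_QT_diff_le_integrals[OF B1 B2 x, where N = N and m = m and f = f]
    unfolding K_def[symmetric] Z_def[symmetric] c_def[symmetric] IG_def[symmetric] IH_def[symmetric] .
  also have "\<dots> \<le> (800 * (real p + 1) + c * \<Omega>\<^sup>2) * (QT_kernel_diff_L2_const p \<Omega> * M\<^sup>2 * Z)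
      + c * Z * (QT_kernel_L2_const p \<Omega> * M\<^sup>2 * \<Omega>\<^sup>2)"
    using IG IH A0 cZ0 by (intro add_mono mult_left_mono)
  also have "\<dots> \<le> row_const p \<Omega> * M\<^sup>2 * Z"
    using Z0 by (simp add: row_const_def c_def algebra_simps)
  finally show ?thesis unfolding Z_def .
qed

lemma QT_diff_l2_bound:
  assumes B1: "in_B p \<Omega> lam1 al1" and B2: "in_B p \<Omega> lam2 al2"
    and f: "\<And>k i. k \<ge> 1 \<Longrightarrow> i \<le> 1 \<Longrightarrow> cmod (f k i) \<le> M" and x: "0 \<le> x" "x \<le> pi"
  defines "A \<equiv> \<lambda>n i. QT p lam1 al1 x f n i - QT p lam2 al2 x f n i"
  shows "summable (\<lambda>n. (cmod (A (Suc n) 0))\<^sup>2 + (cmod (A (Suc n) 1))\<^sup>2)"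
    and "(\<Sum>n. (cmod (A (Suc n) 0))\<^sup>2 + (cmod (A (Suc n) 1))\<^sup>2)
      \<le> row_const p \<Omega> * M\<^sup>2 * (\<Sum>n. (data_dist lam1 al1 lam2 al2 (Suc n))\<^sup>2)"
proof -
  let ?d = "\<lambda>n i k. QT_term p lam1 al1 x f n i (Suc k) - QT_term p lam2 al2 x f n i (Suc k)"
  have "(\<lambda>m. (\<Sum>k<m. QT_term p lam1 al1 x f n i (Suc k)) - (\<Sum>k<m. QT_term p lam2 al2 x f n i (Suc k)))
      \<longlonglongrightarrow> A n i" for n i
    unfolding A_def QT_def
    by (intro tendsto_diff summable_LIMSEQ summable_QT_term[OF B1 f x] summable_QT_term[OF B2 f x])
  then have lim: "(\<lambda>m. \<Sum>k<m. ?d n i k) \<longlonglongrightarrow> A n i" for n i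
    by (simp add: sum_subtractf)
  have partial: "(\<Sum>n<N. (cmod (A (Suc n) 0))\<^sup>2 + (cmod (A (Suc n) 1))\<^sup>2)
      \<le> row_const p \<Omega> * M\<^sup>2 * (\<Sum>n. (data_dist lam1 al1 lam2 al2 (Suc n))\<^sup>2)" for N
  proof (rule LIMSEQ_le_const2)
    show "(\<lambda>m. \<Sum>n<N. (cmod (\<Sum>k<m. ?d (Suc n) 0 k))\<^sup>2 + (cmod (\<Sum>k<m. ?d (Suc n) 1 k))\<^sup>2)
        \<longlonglongrightarrow> (\<Sum>n<N. (cmod (A (Suc n) 0))\<^sup>2 + (cmod (A (Suc n) 1))\<^sup>2)"
      by (intro tendsto_sum tendsto_add tendsto_power tendsto_norm lim)
  qed (intro exI allI impI partial_rows_QT_diff_le[OF B1 B2 f x])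
  show sum: "summable (\<lambda>n. (cmod (A (Suc n) 0))\<^sup>2 + (cmod (A (Suc n) 1))\<^sup>2)"
    by (rule summableI_nonneg_bounded[OF _ partial]) simp
  show "(\<Sum>n. (cmod (A (Suc n) 0))\<^sup>2 + (cmod (A (Suc n) 1))\<^sup>2)
      \<le> row_const p \<Omega> * M\<^sup>2 * (\<Sum>n. (data_dist lam1 al1 lam2 al2 (Suc n))\<^sup>2)"
    by (rule suminf_le_const[OF sum partial])
qed

lemma QT_diff_l2_estimate:
  assumes "in_B p \<Omega> lam1 al1 \<and> in_B p \<Omega> lam2 al2 \<and> x \<in> {0..pi} \<and> in_m f"
  shows "(let A = (\<lambda>n i. QT p lam1 al1 x f n i - QT p lam2 al2 x f n i);
          Z = sqrt (\<Sum>n. (cmod (rho_of lam1 (Suc n) - rho_of lam2 (Suc n))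
                          + cmod (al1 (Suc n) - al2 (Suc n)))\<^sup>2)
      in (\<forall>n\<ge>1. \<forall>i\<le>1. summable (\<lambda>k. QT_term p lam1 al1 x f n i (Suc k))
                      \<and> summable (\<lambda>k. QT_term p lam2 al2 x f n i (Suc k)))
       \<and> summable (\<lambda>n. (cmod (A (Suc n) 0))\<^sup>2 + (cmod (A (Suc n) 1))\<^sup>2)
       \<and> sqrt (\<Sum>n. (cmod (A (Suc n) 0))\<^sup>2 + (cmod (A (Suc n) 1))\<^sup>2) \<le> sqrt (row_const p \<Omega>) * Z * m_norm f)"
proof -
  have B1: "in_B p \<Omega> lam1 al1" and B2: "in_B p \<Omega> lam2 al2" and x: "0 \<le> x" "x \<le> pi" and fm: "in_m f"
    using assms by auto
  have f: "cmod (f k i) \<le> m_norm f" if "k \<ge> 1" "i \<le> 1" for k i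
    unfolding m_norm_def by (rule cSup_upper) (use fm that in \<open>auto simp: in_m_def\<close>)
  have rows: "summable (\<lambda>k. QT_term p lam1 al1 x f n i (Suc k))" "summable (\<lambda>k. QT_term p lam2 al2 x f n i (Suc k))"
    for n i
    by (rule summable_QT_term[OF B1 _ x] summable_QT_term[OF B2 _ x], rule f, assumption+)+
  have l2: "summable (\<lambda>n. (cmod (QT p lam1 al1 x f (Suc n) 0 - QT p lam2 al2 x f (Suc n) 0))\<^sup>2
        + (cmod (QT p lam1 al1 x f (Suc n) 1 - QT p lam2 al2 x f (Suc n) 1))\<^sup>2)"
    by (rule QT_diff_l2_bound(1)[OF B1 B2 _ x]) (rule f)
  have "(\<Sum>n. (cmod (QT p lam1 al1 x f (Suc n) 0 - QT p lam2 al2 x f (Suc n) 0))\<^sup>2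
        + (cmod (QT p lam1 al1 x f (Suc n) 1 - QT p lam2 al2 x f (Suc n) 1))\<^sup>2)
      \<le> row_const p \<Omega> * (m_norm f)\<^sup>2 * (\<Sum>n. (data_dist lam1 al1 lam2 al2 (Suc n))\<^sup>2)"
    (is "?S \<le> _")
    by (rule QT_diff_l2_bound(2)[OF B1 B2 _ x]) (rule f)
  then have "sqrt ?S \<le> sqrt (row_const p \<Omega> * (m_norm f)\<^sup>2 * (\<Sum>n. (data_dist lam1 al1 lam2 al2 (Suc n))\<^sup>2))"
    by (rule real_sqrt_le_mono)
  also have "\<dots> = sqrt (row_const p \<Omega>) * sqrt (\<Sum>n. (data_dist lam1 al1 lam2 al2 (Suc n))\<^sup>2) * m_norm f"
    using order_trans[OF norm_ge_zero f[of 1 0]] by (simp add: real_sqrt_mult)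
  finally have "sqrt ?S \<le> sqrt (row_const p \<Omega>) * sqrt (\<Sum>n. (data_dist lam1 al1 lam2 al2 (Suc n))\<^sup>2) * m_norm f" .
  then show ?thesis using rows l2 by (simp add: Let_def data_dist_def)
qed

theorem lemma4p2:
  fixes p :: nat and \<Omega> :: real
  assumes "\<Omega> > 0"
  shows "\<exists>C>0. \<forall>lam1 al1 lam2 al2 x f.
     in_B p \<Omega> lam1 al1 \<and> in_B p \<Omega> lam2 al2 \<and> x \<in> {0..pi} \<and> in_m f \<longrightarrow>
     (let A = (\<lambda>n i. QT p lam1 al1 x f n i - QT p lam2 al2 x f n i);
          Z = sqrt (\<Sum>n. (cmod (rho_of lam1 (Suc n) - rho_of lam2 (Suc n))
                          + cmod (al1 (Suc n) - al2 (Suc n)))\<^sup>2)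
      in (\<forall>n\<ge>1. \<forall>i\<le>1. summable (\<lambda>k. QT_term p lam1 al1 x f n i (Suc k))
                      \<and> summable (\<lambda>k. QT_term p lam2 al2 x f n i (Suc k)))
       \<and> summable (\<lambda>n. (cmod (A (Suc n) 0))\<^sup>2 + (cmod (A (Suc n) 1))\<^sup>2)
       \<and> sqrt (\<Sum>n. (cmod (A (Suc n) 0))\<^sup>2 + (cmod (A (Suc n) 1))\<^sup>2) \<le> C * Z * m_norm f)"
proof (intro exI[of _ "sqrt (row_const p \<Omega>)"] conjI allI impI)
  show "sqrt (row_const p \<Omega>) > 0" using row_const_pos by simp
qed (erule QT_diff_l2_estimate)

end
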